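(* Let $\mathcal G$ be a tree on $n\ge2$ nodes, with oriented incidence matrix $D_\tau\in\mathbb R^{n\times(n-1)}$, edge-weight matrix $W=\mathrm{diag}(w_1,\dots,w_{n-1})$, $w_l>0$, and time-scale matrix $E=\mathrm{diag}(\epsilon_1,\dots,\epsilon_n)$, $\epsilon_i>0$; let $L_{e,s}^\tau=D_\tau^TE^{-1}D_\tau$ and $\sigma_w,\sigma_v$ real scalars. Consider $$\tilde\Sigma_\tau(s)=\big(sI+L_{e,s}^\tau W\big)^{-1}\begin{bmatrix}\sigma_wD_\tau^TE^{-1/2} & -\sigma_vL_{e,s}^\tau W^{1/2}\end{bmatrix}.$$ Then $L\le\|\tilde\Sigma_\tau\|_\infty^2\le U$, where $L=\max\{L_1,L_2\}$ and $$L_1=\frac{\sigma_w^2+\sigma_v^2\lambda_{\min}(L_{e,s}^\tau)\lambda_{\max}(W^{1/2})^2}{\lambda_{\min}(L_{e,s}^\tau)\lambda_{\max}(W^{1/2})^4},$$ $$L_2=\frac{\sigma_w^2+\sigma_v^2\lambda_{\max}(L_{e,s}^\tau)\lambda_{\max}(W^{1/2})\lambda_{\min}(W^{1/2})}{\lambda_{\max}(L_{e,s}^\tau)\lambda_{\max}(W^{1/2})^3\lambda_{\min}(W^{1/2})},$$ $$U=\frac{\sigma_w^2+\sigma_v^2\lambda_{\min}(L_{e,s}^\tau)\lambda_{\min}(W^{1/2})^2}{\lambda_{\min}(L_{e,s}^\tau)\lambda_{\min}(W^{1/2})^4}.$$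
   Context: The incidence matrix of a graph with an arbitrary orientation of each edge has entry $1$ in row $i$, column $l$ if node $i$ is the initial node of edge $l$, $-1$ if it is the terminal node, and $0$ otherwise. Powers of positive diagonal matrices are taken entrywise. $\lambda_{\max},\lambda_{\min}$ denote the largest and smallest eigenvalues of a symmetric matrix. For a stable transfer matrix $\Phi(s)$, $\|\Phi\|_\infty=\sup_{\omega\in\mathbb R}\bar\sigma(\Phi(j\omega))$ where $\bar\sigma$ is the largest singular value. *)

theory Defs
  imports "Jordan_Normal_Form.Schur_Decomposition" "Jordan_Normal_Form.Gauss_Jordan_Elimination"
begin

text \<open>A graph on nodes 0..n-1 with m edges, edge l oriented from fst (e l) to snd (e l).\<close>

definition edge_rel :: "nat \<Rightarrow> (nat \<Rightarrow> nat \<times> nat) \<Rightarrow> (nat \<times> nat) set" where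
  "edge_rel m e = {(a, b). \<exists>l<m. e l = (a, b) \<or> e l = (b, a)}"

text \<open>A tree on n nodes: n-1 edges without self-loops between nodes 0..n-1, and connected
  (connected with n-1 edges on n nodes is equivalent to being a tree).\<close>
definition is_tree :: "nat \<Rightarrow> (nat \<Rightarrow> nat \<times> nat) \<Rightarrow> bool" where
  "is_tree n e \<longleftrightarrow>
     (\<forall>l < n - 1. fst (e l) < n \<and> snd (e l) < n \<and> fst (e l) \<noteq> snd (e l)) \<and>
     (\<forall>i < n. (0, i) \<in> (edge_rel (n - 1) e)\<^sup>*)"

definition incidence_mat :: "nat \<Rightarrow> nat \<Rightarrow> (nat \<Rightarrow> nat \<times> nat) \<Rightarrow> real mat" where
  "incidence_mat n m e = Matrix.mat n m (\<lambda>(i, l).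
      if i = fst (e l) then 1 else if i = snd (e l) then -1 else 0)"

definition lambda_max :: "real mat \<Rightarrow> real" where
  "lambda_max A = Max {k. eigenvalue A k}"

definition lambda_min :: "real mat \<Rightarrow> real" where
  "lambda_min A = Min {k. eigenvalue A k}"

definition sigma_max :: "complex mat \<Rightarrow> real" where
  "sigma_max M = sqrt (Max {x::real. eigenvalue (mat_adjoint M * M) (complex_of_real x)})"

definition mat_inv :: "'a::field mat \<Rightarrow> 'a mat" where
  "mat_inv A = the (mat_inverse A)"

definition append_cols :: "'a::zero mat \<Rightarrow> 'a mat \<Rightarrow> 'a mat" where
  "append_cols A B = Matrix.mat (dim_row A) (dim_col A + dim_col B)
     (\<lambda>(i, j). if j < dim_col A then A $$ (i, j) else B $$ (i, j - dim_col A))"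

definition hinf_norm :: "(complex \<Rightarrow> complex mat) \<Rightarrow> real" where
  "hinf_norm Phi = (SUP \<omega>::real. sigma_max (Phi (\<i> * complex_of_real \<omega>)))"

definition Sigma_tilde ::
  "nat \<Rightarrow> (nat \<Rightarrow> nat \<times> nat) \<Rightarrow> (nat \<Rightarrow> real) \<Rightarrow> (nat \<Rightarrow> real) \<Rightarrow> real \<Rightarrow> real
   \<Rightarrow> complex \<Rightarrow> complex mat" where
  "Sigma_tilde n e w \<epsilon> \<sigma>w \<sigma>v s =
    (let D = incidence_mat n (n - 1) e;
         W = mat_diag (n - 1) w;
         Wh = mat_diag (n - 1) (\<lambda>l. sqrt (w l));
         Einv = mat_diag n (\<lambda>i. 1 / \<epsilon> i);
         Einvh = mat_diag n (\<lambda>i. 1 / sqrt (\<epsilon> i));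
         Les = transpose_mat D * Einv * D;
         B = append_cols (\<sigma>w \<cdot>\<^sub>m (transpose_mat D * Einvh)) ((- \<sigma>v) \<cdot>\<^sub>m (Les * Wh));
         C = map_mat complex_of_real
     in mat_inv (s \<cdot>\<^sub>m 1\<^sub>m (n - 1) + C (Les * W)) * C B)"

end

theory Submission
  imports Defs
begin

text \<open>The edge Laplacian \<open>L = D\<^sup>T E\<^sup>-\<^sup>1 D\<close> of a tree is positive definite, since the incidence
  matrix of a tree has trivial kernel, and \<open>B B\<^sup>T = \<sigma>\<^sub>w\<^sup>2 L + \<sigma>\<^sub>v\<^sup>2 L W L\<close>, i.e.
  \<open>|B\<^sup>T q|\<^sup>2 = \<sigma>\<^sub>w\<^sup>2 q\<^sup>T L q + \<sigma>\<^sub>v\<^sup>2 \<Sum>\<^sub>l w\<^sub>l (L q)\<^sub>l\<^sup>2\<close>.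

  Upper bound: for \<open>s = i\<omega>\<close> and \<open>u = (s I + L W)\<^sup>H q\<close> we have \<open>\<Sigma>(s)\<^sup>H u = B\<^sup>T q\<close>. Splitting \<open>q\<close>
  into real and imaginary parts, the cross terms of \<open>|u|\<^sup>2\<close> cancel by the symmetry of \<open>L\<close>, which
  leaves \<open>|u|\<^sup>2 \<ge> \<lambda>\<^sub>m\<^sub>i\<^sub>n(W\<^sup>1\<^sup>/\<^sup>2)\<^sup>2 \<Sum>\<^sub>l w\<^sub>l |(L q)\<^sub>l|\<^sup>2\<close>; on the other hand
  \<open>q\<^sup>T L q \<le> |L q|\<^sup>2 / \<lambda>\<^sub>m\<^sub>i\<^sub>n(L)\<close> gives \<open>|B\<^sup>T q|\<^sup>2 \<le> U \<lambda>\<^sub>m\<^sub>i\<^sub>n(W\<^sup>1\<^sup>/\<^sup>2)\<^sup>2 \<Sum>\<^sub>l w\<^sub>l |(L q)\<^sub>l|\<^sup>2\<close>.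

  Lower bound: \<open>\<Sigma>(0) = (L W)\<^sup>-\<^sup>1 B\<close> is real and its transpose maps \<open>W L q\<close> to \<open>B\<^sup>T q\<close>, so
  \<open>\<sigma>\<^sub>m\<^sub>a\<^sub>x(\<Sigma>(0))\<^sup>2 |W L q|\<^sup>2 \<ge> |B\<^sup>T q|\<^sup>2\<close>. An eigenvector of \<open>\<lambda>\<^sub>m\<^sub>i\<^sub>n(L)\<close> yields \<open>L\<^sub>1\<close>, and
  \<open>q = L\<^sup>-\<^sup>1 e\<^sub>l\<close> for an edge \<open>l\<close> of minimal weight yields \<open>L\<^sub>2\<close>.\<close>

section \<open>Quadratic forms and extreme eigenvalues of real symmetric matrices\<close>

lemma scalar_prod_self_nonneg: "0 \<le> v \<bullet> (v :: real vec)"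
  unfolding scalar_prod_def by (intro sum_nonneg) auto

lemma scalar_prod_self_pos:
  fixes v :: "real vec"
  assumes "v \<in> carrier_vec k" "v \<noteq> 0\<^sub>v k"
  shows "0 < v \<bullet> v"
  using conjugate_square_greater_0_vec[OF assms(1)] assms(2) by simp

lemma scalar_prod_eq_sum:
  assumes "x \<in> carrier_vec k" "y \<in> carrier_vec k"
  shows "x \<bullet> y = (\<Sum>i<k. x $ i * y $ i)"
  using assms by (simp add: scalar_prod_def atLeast0LessThan)

lemma scalar_prod_self_eq_sum:
  fixes v :: "real vec"
  assumes "v \<in> carrier_vec k"
  shows "v \<bullet> v = (\<Sum>i<k. (v $ i)^2)"
  using assms by (simp add: scalar_prod_def atLeast0LessThan power2_eq_square)

lemma quadratic_nonneg_discriminant: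
  fixes p q r :: real
  assumes nonneg: "\<And>t. 0 \<le> p + 2 * q * t + r * t^2"
  shows "q^2 \<le> p * r"
proof -
  have p: "0 \<le> p" using nonneg[of 0] by simp
  show ?thesis
  proof (cases "r = 0")
    case True
    have "q = 0"
    proof (rule ccontr)
      assume "q \<noteq> 0"
      have "0 \<le> p + 2 * q * (- (p + 1) / (2 * q)) + r * (- (p + 1) / (2 * q))^2" by (rule nonneg)
      also have "\<dots> = -1" using \<open>q \<noteq> 0\<close> True by (simp add: field_simps)
      finally show False by simp
    qed
    then show ?thesis using True by simp
  next
    case False
    have r: "r > 0"
    proof (rule ccontr)
      assume "\<not> r > 0"
      then have "r < 0" using False by simp
      define t where "t = sqrt ((p + 1) / - r)"
      have "r * t^2 = - (p + 1)"
        unfolding t_def using \<open>r < 0\<close> p by (simp add: divide_nonneg_neg field_simps)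
      moreover have "0 \<le> p + 2 * q * t + r * t^2" "0 \<le> p + 2 * q * (- t) + r * (- t)^2"
        by (rule nonneg)+
      ultimately show False by simp
    qed
    have "0 \<le> p + 2 * q * (- q / r) + r * (- q / r)^2" by (rule nonneg)
    also have "\<dots> = p - q^2 / r" using False by (simp add: field_simps power2_eq_square)
    finally show ?thesis using r by (simp add: field_simps)
  qed
qed

lemma symmetric_form_commute:
  fixes A :: "'a :: comm_ring mat"
  assumes A: "A \<in> carrier_mat k k" and sym: "A\<^sup>T = A"
    and x: "x \<in> carrier_vec k" and y: "y \<in> carrier_vec k"
  shows "y \<bullet> (A *\<^sub>v x) = x \<bullet> (A *\<^sub>v y)"
proof -
  have "y \<bullet> (A *\<^sub>v x) = (A\<^sup>T *\<^sub>v y) \<bullet> x" using transpose_vec_mult_scalar[OF A x y] by simp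
  also have "\<dots> = x \<bullet> (A *\<^sub>v y)" using sym A x y by (simp add: comm_scalar_prod[of _ k])
  finally show ?thesis .
qed

lemma quadratic_form_add_smult:
  fixes A :: "real mat"
  assumes A: "A \<in> carrier_mat k k" and sym: "A\<^sup>T = A"
    and x: "x \<in> carrier_vec k" and y: "y \<in> carrier_vec k"
  shows "(x + t \<cdot>\<^sub>v y) \<bullet> (A *\<^sub>v (x + t \<cdot>\<^sub>v y))
     = x \<bullet> (A *\<^sub>v x) + 2 * (x \<bullet> (A *\<^sub>v y)) * t + (y \<bullet> (A *\<^sub>v y)) * t^2"
proof -
  have "A *\<^sub>v (x + t \<cdot>\<^sub>v y) = A *\<^sub>v x + t \<cdot>\<^sub>v (A *\<^sub>v y)"
    using A x y by (simp add: mult_add_distrib_mat_vec mult_mat_vec)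
  then have "(x + t \<cdot>\<^sub>v y) \<bullet> (A *\<^sub>v (x + t \<cdot>\<^sub>v y))
      = x \<bullet> (A *\<^sub>v x) + t * (x \<bullet> (A *\<^sub>v y)) + t * (y \<bullet> (A *\<^sub>v x)) + t * t * (y \<bullet> (A *\<^sub>v y))"
    using A x y
    by (simp add: add_scalar_prod_distrib[of _ k] scalar_prod_add_distrib[of _ k]
        smult_scalar_prod_distrib[of _ k] scalar_prod_smult_distrib[of _ k] algebra_simps)
  also have "y \<bullet> (A *\<^sub>v x) = x \<bullet> (A *\<^sub>v y)" by (rule symmetric_form_commute[OF A sym x y])
  finally show ?thesis by (simp add: power2_eq_square algebra_simps)
qed

lemma psd_cauchy_schwarz:
  fixes A :: "real mat"
  assumes A: "A \<in> carrier_mat k k" and sym: "A\<^sup>T = A"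
    and psd: "\<And>z. z \<in> carrier_vec k \<Longrightarrow> 0 \<le> z \<bullet> (A *\<^sub>v z)"
    and x: "x \<in> carrier_vec k" and y: "y \<in> carrier_vec k"
  shows "(x \<bullet> (A *\<^sub>v y))^2 \<le> (x \<bullet> (A *\<^sub>v x)) * (y \<bullet> (A *\<^sub>v y))"
proof (rule quadratic_nonneg_discriminant)
  fix t :: real
  show "0 \<le> x \<bullet> (A *\<^sub>v x) + 2 * (x \<bullet> (A *\<^sub>v y)) * t + (y \<bullet> (A *\<^sub>v y)) * t^2"
    using psd[of "x + t \<cdot>\<^sub>v y"] quadratic_form_add_smult[OF A sym x y] x y by simp
qed

lemma cauchy_schwarz_vec:
  fixes x y :: "real vec"
  assumes "x \<in> carrier_vec k" "y \<in> carrier_vec k"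
  shows "(x \<bullet> y)^2 \<le> (x \<bullet> x) * (y \<bullet> y)"
  using psd_cauchy_schwarz[of "1\<^sub>m k" k x y] assms scalar_prod_self_nonneg by simp

lemma mat_vec_norm_le_frobenius:
  fixes M :: "real mat"
  assumes M: "M \<in> carrier_mat r k" and z: "z \<in> carrier_vec k"
  shows "(M *\<^sub>v z) \<bullet> (M *\<^sub>v z) \<le> (\<Sum>i<r. row M i \<bullet> row M i) * (z \<bullet> z)"
proof -
  have "(M *\<^sub>v z) \<bullet> (M *\<^sub>v z) = (\<Sum>i<r. ((M *\<^sub>v z) $ i)^2)"
    using M z by (intro scalar_prod_self_eq_sum) auto
  also have "\<dots> = (\<Sum>i<r. (row M i \<bullet> z)^2)"
    using M by (intro sum.cong) auto
  also have "\<dots> \<le> (\<Sum>i<r. (row M i \<bullet> row M i) * (z \<bullet> z))"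
    using M z by (intro sum_mono cauchy_schwarz_vec[of _ k]) auto
  finally show ?thesis by (simp add: sum_distrib_right)
qed

lemma quadratic_form_bounded:
  fixes A :: "real mat"
  assumes A: "A \<in> carrier_mat k k"
  obtains c where "0 \<le> c" "\<And>z. z \<in> carrier_vec k \<Longrightarrow> z \<bullet> (A *\<^sub>v z) \<le> c * (z \<bullet> z)"
proof
  define F where "F = (\<Sum>i<k. row A i \<bullet> row A i)"
  have F: "0 \<le> F" unfolding F_def using scalar_prod_self_nonneg by (simp add: sum_nonneg)
  then show "0 \<le> 1 + F" by simp
  fix z :: "real vec" assume z: "z \<in> carrier_vec k"
  have zz: "0 \<le> z \<bullet> z" by (rule scalar_prod_self_nonneg)
  have "(z \<bullet> (A *\<^sub>v z))^2 \<le> (z \<bullet> z) * ((A *\<^sub>v z) \<bullet> (A *\<^sub>v z))"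
    using A z by (intro cauchy_schwarz_vec[of _ k]) auto
  also have "\<dots> \<le> (z \<bullet> z) * (F * (z \<bullet> z))"
    unfolding F_def using mat_vec_norm_le_frobenius[OF A z] zz by (rule mult_left_mono)
  also have "\<dots> = F * (z \<bullet> z)^2" by (simp add: power2_eq_square)
  also have "\<dots> \<le> (1 + F)^2 * (z \<bullet> z)^2"
    using F by (intro mult_right_mono) (auto simp: power2_eq_square algebra_simps)
  finally have "(z \<bullet> (A *\<^sub>v z))^2 \<le> ((1 + F) * (z \<bullet> z))^2" by (simp add: power_mult_distrib)
  then have "\<bar>z \<bullet> (A *\<^sub>v z)\<bar> \<le> \<bar>(1 + F) * (z \<bullet> z)\<bar>" by (simp only: abs_le_square_iff)
  then show "z \<bullet> (A *\<^sub>v z) \<le> (1 + F) * (z \<bullet> z)" using zz F by simp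
qed

lemma mult_mat_vec_zero_right:
  assumes "A \<in> carrier_mat r k"
  shows "A *\<^sub>v 0\<^sub>v k = (0\<^sub>v r :: 'a::comm_ring vec)"
  using assms by (intro eq_vecI) (simp_all add: scalar_prod_def)

lemma inverse_exists_if_kernel_trivial:
  fixes A :: "'a::field mat"
  assumes A: "A \<in> carrier_mat k k"
    and ker: "\<And>v. v \<in> carrier_vec k \<Longrightarrow> A *\<^sub>v v = 0\<^sub>v k \<Longrightarrow> v = 0\<^sub>v k"
  obtains B where "B \<in> carrier_mat k k" "A * B = 1\<^sub>m k" "B * A = 1\<^sub>m k"
proof -
  have "det A \<noteq> 0" using det_0_iff_vec_prod_zero_field[OF A] ker by auto
  from det_non_zero_imp_unit[OF A this, of undefined] that show ?thesis
    by (auto simp: Units_def ring_mat_def)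
qed

lemma mat_inv_eqI:
  fixes A :: "'a::field mat"
  assumes A: "A \<in> carrier_mat k k" and B: "B \<in> carrier_mat k k" and AB: "A * B = 1\<^sub>m k"
  shows "mat_inv A = B"
proof -
  have BA: "B * A = 1\<^sub>m k" by (rule mat_mult_left_right_inverse[OF A B AB])
  then have "A \<in> Units (ring_mat TYPE('a) k undefined)"
    using A B AB by (auto simp: Units_def ring_mat_def)
  then obtain P where P: "mat_inverse A = Some P"
    using mat_inverse(1)[OF A, where b = undefined] by (cases "mat_inverse A") auto
  from mat_inverse(2)[OF A P] have PA: "P * A = 1\<^sub>m k" and P_carrier: "P \<in> carrier_mat k k" by auto
  have "P = (P * A) * B" using P_carrier A B AB by (simp add: assoc_mult_mat[of _ k k _ k _ k])
  then have "P = B" using PA B by simp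
  then show ?thesis unfolding mat_inv_def P by simp
qed

text \<open>The constant comes from bounding an inverse of \<open>A\<close> and from the Cauchy-Schwarz inequality
  for the form of \<open>A\<close>.\<close>
lemma psd_coercive_if_kernel_trivial:
  fixes A :: "real mat"
  assumes A: "A \<in> carrier_mat k k" and sym: "A\<^sup>T = A"
    and psd: "\<And>y. y \<in> carrier_vec k \<Longrightarrow> 0 \<le> y \<bullet> (A *\<^sub>v y)"
    and ker: "\<And>v. v \<in> carrier_vec k \<Longrightarrow> A *\<^sub>v v = 0\<^sub>v k \<Longrightarrow> v = 0\<^sub>v k"
  obtains c where "0 < c" "\<And>y. y \<in> carrier_vec k \<Longrightarrow> y \<bullet> y \<le> c * (y \<bullet> (A *\<^sub>v y))"
proof -
  obtain B where B: "B \<in> carrier_mat k k" "B * A = 1\<^sub>m k"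
    using inverse_exists_if_kernel_trivial[OF A ker] by blast
  define cB where "cB = (\<Sum>i<k. row B i \<bullet> row B i)"
  have cB: "0 \<le> cB" unfolding cB_def using scalar_prod_self_nonneg by (simp add: sum_nonneg)
  obtain cA where cA: "0 \<le> cA" "\<And>z. z \<in> carrier_vec k \<Longrightarrow> z \<bullet> (A *\<^sub>v z) \<le> cA * (z \<bullet> z)"
    using quadratic_form_bounded[OF A] by blast
  have bound: "y \<bullet> y \<le> (cB * cA + 1) * (y \<bullet> (A *\<^sub>v y))" if y: "y \<in> carrier_vec k" for y
  proof -
    define z where "z = A *\<^sub>v y"
    have z: "z \<in> carrier_vec k" unfolding z_def using A y by simp
    have q0: "0 \<le> y \<bullet> (A *\<^sub>v y)" by (rule psd[OF y])
    have "B *\<^sub>v z = y" unfolding z_def using B A y by (simp add: assoc_mult_mat_vec[symmetric, of _ k k])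
    then have yz: "y \<bullet> y \<le> cB * (z \<bullet> z)" using mat_vec_norm_le_frobenius[OF B(1) z] unfolding cB_def by simp
    have "(z \<bullet> z)^2 = (y \<bullet> (A *\<^sub>v z))^2"
      using symmetric_form_commute[OF A sym y z] comm_scalar_prod[OF y z] unfolding z_def by simp
    also have "\<dots> \<le> (y \<bullet> (A *\<^sub>v y)) * (z \<bullet> (A *\<^sub>v z))" by (rule psd_cauchy_schwarz[OF A sym psd y z])
    also have "\<dots> \<le> (y \<bullet> (A *\<^sub>v y)) * (cA * (z \<bullet> z))" using cA(2)[OF z] q0 by (rule mult_left_mono)
    finally have zz: "(z \<bullet> z) * (z \<bullet> z) \<le> (cA * (y \<bullet> (A *\<^sub>v y))) * (z \<bullet> z)"
      by (simp add: power2_eq_square ac_simps)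
    have "z \<bullet> z \<le> cA * (y \<bullet> (A *\<^sub>v y))"
    proof (cases "z \<bullet> z = 0")
      case False
      then have "0 < z \<bullet> z" using scalar_prod_self_nonneg[of z] by simp
      with zz show ?thesis by (rule mult_right_le_imp_le)
    qed (use q0 cA(1) in simp)
    then have "cB * (z \<bullet> z) \<le> cB * (cA * (y \<bullet> (A *\<^sub>v y)))" using cB by (rule mult_left_mono)
    then have "y \<bullet> y \<le> cB * cA * (y \<bullet> (A *\<^sub>v y))" using yz by (simp add: mult.assoc)
    then show ?thesis using q0 by (simp add: algebra_simps)
  qed
  have pos: "0 < cB * cA + 1" using cA(1) cB by (intro add_nonneg_pos mult_nonneg_nonneg) simp_all
  show ?thesis by (rule that[OF pos bound])
qed

lemma char_matrix_quadratic_form: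
  fixes A :: "real mat"
  assumes A: "A \<in> carrier_mat k k" and y: "y \<in> carrier_vec k"
  shows "y \<bullet> (char_matrix A e *\<^sub>v y) = y \<bullet> (A *\<^sub>v y) - e * (y \<bullet> y)"
proof -
  have "char_matrix A e *\<^sub>v y = A *\<^sub>v y + (- e) \<cdot>\<^sub>v y"
    using A y by (intro eq_vecI) (auto simp: char_matrix_def add_scalar_prod_distrib[of _ k])
  then show ?thesis using A y by (simp add: scalar_prod_add_distrib[of _ k] scalar_prod_smult_distrib[of _ k])
qed

definition rayleigh_sup :: "nat \<Rightarrow> real mat \<Rightarrow> real" where
  "rayleigh_sup k A = Sup {y \<bullet> (A *\<^sub>v y) / (y \<bullet> y) | y. y \<in> carrier_vec k \<and> y \<noteq> 0\<^sub>v k}"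

lemma rayleigh_quotients_bdd:
  fixes A :: "real mat"
  assumes A: "A \<in> carrier_mat k k" and k: "0 < k"
  defines "R \<equiv> {y \<bullet> (A *\<^sub>v y) / (y \<bullet> y) | y. y \<in> carrier_vec k \<and> y \<noteq> 0\<^sub>v k}"
  shows "R \<noteq> {}" and "bdd_above R"
proof -
  show "R \<noteq> {}" unfolding R_def using k
    by (auto intro!: exI[of _ "unit_vec k 0"] simp: unit_vec_eq[of 0 k])
  obtain c where "\<And>z. z \<in> carrier_vec k \<Longrightarrow> z \<bullet> (A *\<^sub>v z) \<le> c * (z \<bullet> z)"
    using quadratic_form_bounded[OF A] by blast
  then show "bdd_above R" unfolding R_def
    by (intro bdd_aboveI[of _ c]) (auto simp: divide_le_eq scalar_prod_self_pos)
qed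

lemma rayleigh_le_rayleigh_sup:
  fixes A :: "real mat"
  assumes A: "A \<in> carrier_mat k k" and k: "0 < k" and y: "y \<in> carrier_vec k"
  shows "y \<bullet> (A *\<^sub>v y) \<le> rayleigh_sup k A * (y \<bullet> y)"
proof (cases "y = 0\<^sub>v k")
  case False
  have "y \<bullet> (A *\<^sub>v y) / (y \<bullet> y) \<le> rayleigh_sup k A" unfolding rayleigh_sup_def
    by (rule cSup_upper[OF _ rayleigh_quotients_bdd(2)[OF A k]]) (use y False in auto)
  then show ?thesis using scalar_prod_self_pos[OF y False] by (simp add: divide_le_eq)
qed (use A in simp)

lemma char_matrix_symmetric:
  assumes A: "A \<in> carrier_mat k k" and sym: "A\<^sup>T = A"
  shows "(char_matrix A e)\<^sup>T = char_matrix A e"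
proof -
  have "((- e) \<cdot>\<^sub>m 1\<^sub>m k)\<^sup>T = (- e) \<cdot>\<^sub>m 1\<^sub>m k" by (intro eq_matI) auto
  then show ?thesis unfolding char_matrix_def using A sym by (simp add: transpose_add[of _ k k])
qed

text \<open>Otherwise the positive semidefinite form of \<open>M I - A\<close>, \<open>M\<close> the supremum, would be coercive,
  which pushes the supremum strictly below \<open>M\<close>.\<close>
lemma rayleigh_sup_eigenvalue:
  fixes A :: "real mat"
  assumes A: "A \<in> carrier_mat k k" and sym: "A\<^sup>T = A" and k: "0 < k"
  shows "eigenvalue A (rayleigh_sup k A)"
proof (rule ccontr)
  assume not_eig: "\<not> eigenvalue A (rayleigh_sup k A)"
  define M where "M = rayleigh_sup k A"
  define C where "C = - char_matrix A M"
  have C: "C \<in> carrier_mat k k" unfolding C_def using A by simp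
  have Cv: "C *\<^sub>v v = - (char_matrix A M *\<^sub>v v)" if "v \<in> carrier_vec k" for v
    unfolding C_def by (rule uminus_mult_mat_vec) (use A that in \<open>simp add: char_matrix_def\<close>)
  have quadC: "y \<bullet> (C *\<^sub>v y) = M * (y \<bullet> y) - y \<bullet> (A *\<^sub>v y)" if y: "y \<in> carrier_vec k" for y
  proof -
    have "dim_vec (char_matrix A M *\<^sub>v y) = dim_vec y" using A y by (simp add: char_matrix_def)
    then show ?thesis using char_matrix_quadratic_form[OF A y] Cv[OF y] by simp
  qed
  have sym_C: "C\<^sup>T = C" unfolding C_def using char_matrix_symmetric[OF A sym] by (simp add: transpose_uminus)
  have psd_C: "0 \<le> y \<bullet> (C *\<^sub>v y)" if "y \<in> carrier_vec k" for y
    using quadC[OF that] rayleigh_le_rayleigh_sup[OF A k that] unfolding M_def by simp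
  have ker_C: "v = 0\<^sub>v k" if v: "v \<in> carrier_vec k" "C *\<^sub>v v = 0\<^sub>v k" for v
  proof (rule ccontr)
    assume "v \<noteq> 0\<^sub>v k"
    have "char_matrix A M *\<^sub>v v = 0\<^sub>v k"
      using v Cv[OF v(1)] uminus_zero_vec_eq[of "char_matrix A M *\<^sub>v v" k]
        mult_mat_vec_carrier[OF char_matrix_closed[OF A] v(1)] by simp
    then show False
      using not_eig \<open>v \<noteq> 0\<^sub>v k\<close> v(1) unfolding M_def eigenvalue_char_matrix[OF A] by blast
  qed
  obtain c where c: "0 < c" "\<And>y. y \<in> carrier_vec k \<Longrightarrow> y \<bullet> y \<le> c * (y \<bullet> (C *\<^sub>v y))"
    using psd_coercive_if_kernel_trivial[OF C sym_C psd_C ker_C] by blast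
  have "rayleigh_sup k A \<le> M - 1 / c" unfolding rayleigh_sup_def
  proof (rule cSup_least)
    fix r assume "r \<in> {y \<bullet> (A *\<^sub>v y) / (y \<bullet> y) | y. y \<in> carrier_vec k \<and> y \<noteq> 0\<^sub>v k}"
    then obtain y where y: "y \<in> carrier_vec k" "y \<noteq> 0\<^sub>v k" and r: "r = y \<bullet> (A *\<^sub>v y) / (y \<bullet> y)"
      by auto
    have "y \<bullet> y \<le> c * (M * (y \<bullet> y) - y \<bullet> (A *\<^sub>v y))" using c(2)[OF y(1)] quadC[OF y(1)] by simp
    then have "y \<bullet> (A *\<^sub>v y) \<le> (M - 1 / c) * (y \<bullet> y)" using c(1) by (simp add: field_simps)
    then show "r \<le> M - 1 / c" unfolding r using scalar_prod_self_pos[OF y] by (simp add: divide_le_eq)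
  qed (rule rayleigh_quotients_bdd(1)[OF A k])
  then show False using c(1) unfolding M_def by simp
qed

lemma eigenvalues_finite:
  fixes A :: "'a::field mat"
  assumes "A \<in> carrier_mat k k"
  shows "finite {x. eigenvalue A x}"
proof -
  have "char_poly A \<noteq> 0" using degree_monic_char_poly[OF assms] by auto
  then show ?thesis using poly_roots_finite eigenvalue_root_char_poly[OF assms] by simp
qed

lemma eigenvalue_uminus:
  fixes A :: "'a::field mat"
  assumes A: "A \<in> carrier_mat k k"
  shows "eigenvalue (- A) x \<longleftrightarrow> eigenvalue A (- x)"
proof -
  have "(- A) *\<^sub>v v = x \<cdot>\<^sub>v v \<longleftrightarrow> A *\<^sub>v v = (- x) \<cdot>\<^sub>v v" if "v \<in> carrier_vec k" for v
    using that A by (auto simp: vec_eq_iff) (metis minus_minus)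
  then have "eigenvector (- A) v x \<longleftrightarrow> eigenvector A v (- x)" for v
    using A unfolding eigenvector_def by auto
  then show ?thesis unfolding eigenvalue_def by simp
qed

lemma symmetric_extreme_eigenvalues:
  fixes A :: "real mat"
  assumes A: "A \<in> carrier_mat k k" and sym: "A\<^sup>T = A" and k: "0 < k"
  shows "eigenvalue A (lambda_max A)" "eigenvalue A (lambda_min A)"
    and "\<And>y. y \<in> carrier_vec k \<Longrightarrow> y \<bullet> (A *\<^sub>v y) \<le> lambda_max A * (y \<bullet> y)"
    and "\<And>y. y \<in> carrier_vec k \<Longrightarrow> lambda_min A * (y \<bullet> y) \<le> y \<bullet> (A *\<^sub>v y)"
    and "lambda_min A \<le> lambda_max A"
proof -
  have mA: "- A \<in> carrier_mat k k" "(- A)\<^sup>T = - A" using A sym by (auto simp: transpose_uminus)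
  have upper: "y \<bullet> (A *\<^sub>v y) \<le> rayleigh_sup k A * (y \<bullet> y)"
    and lower: "- rayleigh_sup k (- A) * (y \<bullet> y) \<le> y \<bullet> (A *\<^sub>v y)" if y: "y \<in> carrier_vec k" for y
    using rayleigh_le_rayleigh_sup[OF A k y] rayleigh_le_rayleigh_sup[OF mA(1) k y] A y by simp_all
  have ub: "x \<le> rayleigh_sup k A" and lb: "- rayleigh_sup k (- A) \<le> x" if eig: "eigenvalue A x" for x
  proof -
    obtain v where v: "v \<in> carrier_vec k" "v \<noteq> 0\<^sub>v k" "A *\<^sub>v v = x \<cdot>\<^sub>v v"
      using eig A unfolding eigenvalue_def eigenvector_def by auto
    have "v \<bullet> (A *\<^sub>v v) = x * (v \<bullet> v)" using v by (simp add: scalar_prod_smult_distrib[of _ k])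
    then have "x * (v \<bullet> v) \<le> rayleigh_sup k A * (v \<bullet> v)"
      "- rayleigh_sup k (- A) * (v \<bullet> v) \<le> x * (v \<bullet> v)"
      using upper[OF v(1)] lower[OF v(1)] by simp_all
    then show "x \<le> rayleigh_sup k A" "- rayleigh_sup k (- A) \<le> x"
      using scalar_prod_self_pos[OF v(1,2)] by (simp_all add: mult_right_le_imp_le)
  qed
  have eig_max: "eigenvalue A (rayleigh_sup k A)" by (rule rayleigh_sup_eigenvalue[OF A sym k])
  have eig_min: "eigenvalue A (- rayleigh_sup k (- A))"
    using rayleigh_sup_eigenvalue[OF mA k] eigenvalue_uminus[OF A] by simp
  have fin: "finite {x. eigenvalue A x}" by (rule eigenvalues_finite[OF A])
  have max: "lambda_max A = rayleigh_sup k A"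
    unfolding lambda_max_def by (rule Max_eqI[OF fin]) (use ub eig_max in auto)
  have min: "lambda_min A = - rayleigh_sup k (- A)"
    unfolding lambda_min_def by (rule Min_eqI[OF fin]) (use lb eig_min in auto)
  show "eigenvalue A (lambda_max A)" "eigenvalue A (lambda_min A)"
    and "lambda_min A \<le> lambda_max A"
    using eig_max eig_min ub[OF eig_min] max min by simp_all
  show "y \<bullet> (A *\<^sub>v y) \<le> lambda_max A * (y \<bullet> y)" "lambda_min A * (y \<bullet> y) \<le> y \<bullet> (A *\<^sub>v y)"
    if "y \<in> carrier_vec k" for y
    using upper[OF that] lower[OF that] max min by simp_all
qed

lemma eigenvalue_mult_swap:
  fixes A B :: "'a::field mat"
  assumes A: "A \<in> carrier_mat r c" and B: "B \<in> carrier_mat c r"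
    and eig: "eigenvalue (A * B) x" and x: "x \<noteq> 0"
  shows "eigenvalue (B * A) x"
proof -
  obtain v where v: "v \<in> carrier_vec r" "v \<noteq> 0\<^sub>v r" "(A * B) *\<^sub>v v = x \<cdot>\<^sub>v v"
    using eig A B unfolding eigenvalue_def eigenvector_def by auto
  have ABv: "A *\<^sub>v (B *\<^sub>v v) = x \<cdot>\<^sub>v v" using v A B by simp
  have "B *\<^sub>v v \<noteq> 0\<^sub>v c"
  proof
    assume "B *\<^sub>v v = 0\<^sub>v c"
    then have "x \<cdot>\<^sub>v v = 0\<^sub>v r" using ABv mult_mat_vec_zero_right[OF A] by simp
    then show False using x v(1,2) by (auto simp: vec_eq_iff)
  qed
  moreover have "(B * A) *\<^sub>v (B *\<^sub>v v) = x \<cdot>\<^sub>v (B *\<^sub>v v)"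
    using A B v(1) ABv by (simp add: mult_mat_vec)
  ultimately show ?thesis unfolding eigenvalue_def eigenvector_def using A B v(1)
    by (intro exI[of _ "B *\<^sub>v v"]) auto
qed

section \<open>Diagonal matrices and congruences\<close>

lemma smult_mat_mult_vec:
  assumes "M \<in> carrier_mat r c" "v \<in> carrier_vec c"
  shows "(a \<cdot>\<^sub>m M) *\<^sub>v v = a \<cdot>\<^sub>v (M *\<^sub>v (v :: 'a::comm_ring vec))"
  using assms by (intro eq_vecI) (auto simp: scalar_prod_def sum_distrib_left ac_simps)

lemma smult_one_mult_vec:
  assumes "z \<in> carrier_vec k"
  shows "(c \<cdot>\<^sub>m 1\<^sub>m k) *\<^sub>v z = c \<cdot>\<^sub>v (z :: 'a::comm_ring_1 vec)"
  using smult_mat_mult_vec[OF one_carrier_mat assms] assms by simp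

lemma transpose_smult_mat: "(a \<cdot>\<^sub>m A)\<^sup>T = a \<cdot>\<^sub>m A\<^sup>T"
  by (rule eq_matI) auto

lemma mat_diag_mult_vec:
  assumes "v \<in> carrier_vec k"
  shows "mat_diag k f *\<^sub>v v = vec k (\<lambda>i. f i * v $ i)"
proof (rule eq_vecI)
  fix i assume "i < dim_vec (vec k (\<lambda>i. f i * v $ i))"
  then have i: "i < k" by simp
  have "(\<Sum>j = 0..<k. (if i = j then f j else 0) * v $ j) = (\<Sum>j = 0..<k. if j = i then f i * v $ i else 0)"
    by (intro sum.cong) auto
  then show "(mat_diag k f *\<^sub>v v) $ i = vec k (\<lambda>i. f i * v $ i) $ i"
    using i assms by (simp add: mat_diag_def scalar_prod_def row_def)
qed (use assms in \<open>auto simp: mat_diag_def\<close>)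

lemma mat_diag_transpose: "(mat_diag k f)\<^sup>T = mat_diag k f"
  by (rule eq_matI) (auto simp: mat_diag_def)

lemma quadratic_form_mat_diag:
  fixes f :: "nat \<Rightarrow> real"
  assumes "y \<in> carrier_vec k"
  shows "y \<bullet> (mat_diag k f *\<^sub>v y) = (\<Sum>i<k. f i * (y $ i)^2)"
  using assms by (simp add: mat_diag_mult_vec scalar_prod_def atLeast0LessThan power2_eq_square algebra_simps)

lemma mat_diag_mult_vec_norm:
  fixes f :: "nat \<Rightarrow> real"
  assumes "v \<in> carrier_vec k"
  shows "(mat_diag k f *\<^sub>v v) \<bullet> (mat_diag k f *\<^sub>v v) = (\<Sum>i<k. (f i)\<^sup>2 * (v $ i)\<^sup>2)"
  using assms by (simp add: mat_diag_mult_vec scalar_prod_self_eq_sum[of _ k] power_mult_distrib)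

lemma eigenvalue_mat_diag:
  fixes f :: "nat \<Rightarrow> 'a::field"
  shows "eigenvalue (mat_diag k f) x \<longleftrightarrow> (\<exists>i<k. x = f i)"
proof
  assume "eigenvalue (mat_diag k f) x"
  then obtain v where v: "v \<in> carrier_vec k" "v \<noteq> 0\<^sub>v k" "mat_diag k f *\<^sub>v v = x \<cdot>\<^sub>v v"
    unfolding eigenvalue_def eigenvector_def by (auto simp: mat_diag_def)
  obtain i where i: "i < k" "v $ i \<noteq> 0" using v(1,2) by (auto simp: vec_eq_iff)
  have "f i * v $ i = x * v $ i"
    using arg_cong[OF v(3), of "\<lambda>u. u $ i"] i v(1) by (simp add: mat_diag_mult_vec)
  then show "\<exists>i<k. x = f i" using i by auto
next
  assume "\<exists>i<k. x = f i"
  then obtain i where i: "i < k" "x = f i" by auto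
  have "mat_diag k f *\<^sub>v unit_vec k i = x \<cdot>\<^sub>v unit_vec k i"
    using i by (auto simp: mat_diag_mult_vec vec_eq_iff unit_vec_def)
  moreover have "unit_vec k i \<noteq> (0\<^sub>v k :: 'a vec)" using i by (auto simp: vec_eq_iff unit_vec_def)
  ultimately show "eigenvalue (mat_diag k f) x" unfolding eigenvalue_def eigenvector_def
    by (intro exI[of _ "unit_vec k i"]) (auto simp: mat_diag_def)
qed

lemma lambda_max_mat_diag: "lambda_max (mat_diag k f) = Max (f ` {..<k})"
  and lambda_min_mat_diag: "lambda_min (mat_diag k f) = Min (f ` {..<k})"
proof -
  have "{x. eigenvalue (mat_diag k f) x} = f ` {..<k}" by (auto simp: eigenvalue_mat_diag)
  then show "lambda_max (mat_diag k f) = Max (f ` {..<k})" "lambda_min (mat_diag k f) = Min (f ` {..<k})"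
    unfolding lambda_max_def lambda_min_def by simp_all
qed

lemma congruence_carrier:
  assumes "D \<in> carrier_mat n m"
  shows "D\<^sup>T * mat_diag n f * D \<in> carrier_mat m m"
proof -
  have "D\<^sup>T \<in> carrier_mat m n" using assms by simp
  then show ?thesis by (rule mult_carrier_mat[OF mult_carrier_mat[OF _ mat_diag_dim] assms])
qed

lemma congruence_diag_symmetric:
  fixes D :: "'a::comm_ring_1 mat"
  assumes D: "D \<in> carrier_mat n m"
  shows "(D\<^sup>T * mat_diag n f * D)\<^sup>T = D\<^sup>T * mat_diag n f * D"
proof -
  have DT: "D\<^sup>T \<in> carrier_mat m n" and DTE: "D\<^sup>T * mat_diag n f \<in> carrier_mat m n" using D by auto
  have "(D\<^sup>T * mat_diag n f * D)\<^sup>T = D\<^sup>T * (D\<^sup>T * mat_diag n f)\<^sup>T"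
    using transpose_mult[OF DTE D] by (simp add: transpose_transpose)
  also have "(D\<^sup>T * mat_diag n f)\<^sup>T = mat_diag n f * D"
    using transpose_mult[OF DT mat_diag_dim] by (simp add: transpose_transpose mat_diag_transpose)
  finally show ?thesis using assoc_mult_mat[OF DT mat_diag_dim D] by simp
qed

lemma quadratic_form_congruence_diag:
  fixes f :: "nat \<Rightarrow> real"
  assumes D: "D \<in> carrier_mat n m" and q: "q \<in> carrier_vec m"
  shows "q \<bullet> ((D\<^sup>T * mat_diag n f * D) *\<^sub>v q) = (\<Sum>i<n. f i * ((D *\<^sub>v q) $ i)\<^sup>2)"
proof -
  have Dq: "D *\<^sub>v q \<in> carrier_vec n" using D q by simp
  have "(D\<^sup>T * mat_diag n f * D) *\<^sub>v q = D\<^sup>T *\<^sub>v (mat_diag n f *\<^sub>v (D *\<^sub>v q))"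
  proof -
    have DT: "D\<^sup>T \<in> carrier_mat m n" and DTE: "D\<^sup>T * mat_diag n f \<in> carrier_mat m n" using D by auto
    show ?thesis using assoc_mult_mat_vec[OF DTE D q] assoc_mult_mat_vec[OF DT mat_diag_dim Dq] by simp
  qed
  then have "q \<bullet> ((D\<^sup>T * mat_diag n f * D) *\<^sub>v q) = (D *\<^sub>v q) \<bullet> (mat_diag n f *\<^sub>v (D *\<^sub>v q))"
  proof -
    have x: "mat_diag n f *\<^sub>v (D *\<^sub>v q) \<in> carrier_vec n" by (rule mult_mat_vec_carrier[OF mat_diag_dim Dq])
    have "D\<^sup>T *\<^sub>v (mat_diag n f *\<^sub>v (D *\<^sub>v q)) \<in> carrier_vec m" using D x by simp
    then show ?thesis
      using \<open>_ = D\<^sup>T *\<^sub>v _\<close> transpose_vec_mult_scalar[OF D q x] comm_scalar_prod[OF q] comm_scalar_prod[OF x Dq]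
      by simp
  qed
  then show ?thesis using quadratic_form_mat_diag[OF Dq] by simp
qed

lemma transpose_smult_mult_mult_vec:
  assumes X: "X \<in> carrier_mat r s" and Y: "Y \<in> carrier_mat s t" and q: "q \<in> carrier_vec r"
  shows "(a \<cdot>\<^sub>m (X * Y))\<^sup>T *\<^sub>v q = a \<cdot>\<^sub>v (Y\<^sup>T *\<^sub>v (X\<^sup>T *\<^sub>v (q :: 'a::comm_ring_1 vec)))"
proof -
  have YX: "Y\<^sup>T * X\<^sup>T \<in> carrier_mat t r" using X Y by simp
  have "(a \<cdot>\<^sub>m (X * Y))\<^sup>T = a \<cdot>\<^sub>m (Y\<^sup>T * X\<^sup>T)" using transpose_mult[OF X Y] by (simp add: transpose_smult_mat)
  then show ?thesis using smult_mat_mult_vec[OF YX q] X Y q by simp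
qed

lemma append_cols_carrier:
  assumes "P \<in> carrier_mat r c1" "Q \<in> carrier_mat r c2"
  shows "append_cols P Q \<in> carrier_mat r (c1 + c2)"
  using assms unfolding append_cols_def by (simp add: carrier_matD)

lemma transpose_append_cols_mult_vec:
  assumes P: "P \<in> carrier_mat r c1" and Q: "Q \<in> carrier_mat r c2" and q: "q \<in> carrier_vec r"
  shows "(append_cols P Q)\<^sup>T *\<^sub>v q = (P\<^sup>T *\<^sub>v q) @\<^sub>v (Q\<^sup>T *\<^sub>v q)"
  using assms by (intro eq_vecI) (auto simp: append_cols_def scalar_prod_def col_def)

section \<open>Incidence matrices of trees\<close>

lemma incidence_mat_mult_unit_vec:
  assumes "l < m" "fst (e l) \<noteq> snd (e l)"
  shows "incidence_mat n m e *\<^sub>v unit_vec m l = unit_vec n (fst (e l)) - unit_vec n (snd (e l))"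
proof (rule eq_vecI)
  fix i assume "i < dim_vec (unit_vec n (fst (e l)) - unit_vec n (snd (e l)) :: real vec)"
  then have i: "i < n" by simp
  let ?d = "\<lambda>j. if i = fst (e j) then 1 else if i = snd (e j) then -1 else (0::real)"
  have "(\<Sum>j = 0..<m. ?d j * (if j = l then 1 else 0)) = (\<Sum>j = 0..<m. if j = l then ?d l else 0)"
    by (intro sum.cong) auto
  then show "(incidence_mat n m e *\<^sub>v unit_vec m l) $ i = (unit_vec n (fst (e l)) - unit_vec n (snd (e l))) $ i"
    using i assms by (auto simp: incidence_mat_def scalar_prod_def row_def unit_vec_def)
qed (auto simp: incidence_mat_def)

lemma tree_incidence_range:
  assumes tree: "is_tree n e" and path: "(0, i) \<in> (edge_rel (n - 1) e)\<^sup>*"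
  obtains c where "c \<in> carrier_vec (n - 1)" "incidence_mat n (n - 1) e *\<^sub>v c = unit_vec n 0 - unit_vec n i"
proof -
  let ?D = "incidence_mat n (n - 1) e"
  have D: "?D \<in> carrier_mat n (n - 1)" by (simp add: incidence_mat_def)
  from path have "\<exists>c \<in> carrier_vec (n - 1). ?D *\<^sub>v c = unit_vec n 0 - unit_vec n i"
  proof (induction rule: rtrancl_induct)
    case base
    show ?case using D by (intro bexI[of _ "0\<^sub>v (n - 1)"]) (auto simp: mult_mat_vec_zero_right)
  next
    case (step a b)
    from step.IH obtain c where c: "c \<in> carrier_vec (n - 1)" "?D *\<^sub>v c = unit_vec n 0 - unit_vec n a"
      by auto
    from step.hyps(2) obtain l where l: "l < n - 1" "e l = (a, b) \<or> e l = (b, a)"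
      unfolding edge_rel_def by auto
    have "fst (e l) \<noteq> snd (e l)" using tree l(1) unfolding is_tree_def by auto
    then have col: "?D *\<^sub>v unit_vec (n - 1) l = unit_vec n (fst (e l)) - unit_vec n (snd (e l))"
      by (rule incidence_mat_mult_unit_vec[OF l(1)])
    have u: "unit_vec (n - 1) l \<in> carrier_vec (n - 1)" by simp
    show ?case
    proof (cases "e l = (a, b)")
      case True
      have "?D *\<^sub>v (c + unit_vec (n - 1) l) = unit_vec n 0 - unit_vec n b"
        unfolding mult_add_distrib_mat_vec[OF D c(1) u] c(2) col True by (auto simp: vec_eq_iff)
      then show ?thesis using c(1) by (intro bexI[of _ "c + unit_vec (n - 1) l"]) auto
    next
      case False
      then have "e l = (b, a)" using l(2) by auto
      then have "?D *\<^sub>v (c - unit_vec (n - 1) l) = unit_vec n 0 - unit_vec n b"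
        unfolding mult_minus_distrib_mat_vec[OF D c(1) u] c(2) col by (auto simp: vec_eq_iff)
      then show ?thesis using c(1) by (intro bexI[of _ "c - unit_vec (n - 1) l"]) auto
    qed
  qed
  then show ?thesis using that by blast
qed

text \<open>Deleting row \<open>0\<close> of the incidence matrix of a tree leaves a square matrix \<open>D'\<close>, and
  the vectors \<open>c\<close> with \<open>D c = e\<^sub>0 - e\<^sub>i\<close> form the columns of a right inverse of \<open>- D'\<close>.\<close>
lemma tree_incidence_mat_kernel:
  assumes tree: "is_tree n e" and n: "n \<ge> 2"
    and x: "x \<in> carrier_vec (n - 1)" and Dx: "incidence_mat n (n - 1) e *\<^sub>v x = 0\<^sub>v n"
  shows "x = 0\<^sub>v (n - 1)"
proof -
  define m where "m = n - 1"
  define D where "D = incidence_mat n m e"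
  have D: "D \<in> carrier_mat n m" by (simp add: D_def incidence_mat_def)
  have "\<exists>c. c \<in> carrier_vec m \<and> D *\<^sub>v c = unit_vec n 0 - unit_vec n i" if "i < n" for i
    using tree_incidence_range[OF tree, of i] tree that unfolding is_tree_def D_def m_def by metis
  then obtain c where c: "\<And>i. i < n \<Longrightarrow> c i \<in> carrier_vec m \<and> D *\<^sub>v c i = unit_vec n 0 - unit_vec n i"
    by metis
  define X where "X = mat m m (\<lambda>(l, j). - (c (j + 1) $ l))"
  define D' where "D' = mat m m (\<lambda>(i, l). D $$ (i + 1, l))"
  have X: "X \<in> carrier_mat m m" and D': "D' \<in> carrier_mat m m" by (auto simp: X_def D'_def)
  have "D' * X = 1\<^sub>m m"
  proof (rule eq_matI)
    fix i j assume "i < dim_row (1\<^sub>m m :: real mat)" "j < dim_col (1\<^sub>m m :: real mat)"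
    then have i: "i < m" and j: "j < m" by auto
    have jn: "j + 1 < n" using j m_def n by simp
    have "(D' * X) $$ (i, j) = - (\<Sum>l = 0..<m. D $$ (i + 1, l) * c (j + 1) $ l)"
      using i j by (simp add: D'_def X_def scalar_prod_def row_def col_def sum_negf[symmetric])
    also have "(\<Sum>l = 0..<m. D $$ (i + 1, l) * c (j + 1) $ l) = (D *\<^sub>v c (j + 1)) $ (i + 1)"
      using i D conjunct1[OF c[OF jn]] m_def n by (simp add: scalar_prod_def row_def)
    also have "\<dots> = (unit_vec n 0 - unit_vec n (j + 1)) $ (i + 1)" using conjunct2[OF c[OF jn]] by simp
    also have "\<dots> = - (if i = j then 1 else 0)" using i j m_def n by (simp add: unit_vec_def)
    finally show "(D' * X) $$ (i, j) = 1\<^sub>m m $$ (i, j)" using i j by simp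
  qed (auto simp: D'_def X_def)
  then have XD': "X * D' = 1\<^sub>m m" by (rule mat_mult_left_right_inverse[OF D' X])
  have xm: "x \<in> carrier_vec m" using x m_def by simp
  have "D' *\<^sub>v x = 0\<^sub>v m"
  proof (rule eq_vecI)
    fix i assume "i < dim_vec (0\<^sub>v m :: real vec)"
    then have i: "i < m" by simp
    have "(D' *\<^sub>v x) $ i = (D *\<^sub>v x) $ (i + 1)"
      using i xm D m_def n by (simp add: D'_def scalar_prod_def row_def)
    also have "\<dots> = 0" using Dx i m_def n unfolding D_def by simp
    finally show "(D' *\<^sub>v x) $ i = 0\<^sub>v m $ i" using i by simp
  qed (simp add: D'_def)
  then have "(X * D') *\<^sub>v x = 0\<^sub>v m" using X D' xm by (simp add: mult_mat_vec_zero_right)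
  then show ?thesis using XD' xm m_def by simp
qed

lemma tree_laplacian_pos_def:
  fixes \<epsilon> :: "nat \<Rightarrow> real"
  assumes n: "n \<ge> 2" and tree: "is_tree n e" and \<epsilon>: "\<forall>i<n. 0 < \<epsilon> i"
    and q: "q \<in> carrier_vec (n - 1)" "q \<noteq> 0\<^sub>v (n - 1)"
  defines "D \<equiv> incidence_mat n (n - 1) e"
  shows "0 < q \<bullet> ((D\<^sup>T * mat_diag n (\<lambda>i. 1 / \<epsilon> i) * D) *\<^sub>v q)"
proof -
  have D: "D \<in> carrier_mat n (n - 1)" unfolding D_def by (simp add: incidence_mat_def)
  have "D *\<^sub>v q \<noteq> 0\<^sub>v n" using tree_incidence_mat_kernel[OF tree n q(1)] q(2) unfolding D_def by blast
  then obtain i where i: "i < n" "(D *\<^sub>v q) $ i \<noteq> 0" using D by (auto simp: vec_eq_iff)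
  have "0 < (\<Sum>i<n. 1 / \<epsilon> i * ((D *\<^sub>v q) $ i)\<^sup>2)"
    using i \<epsilon> by (intro sum_pos2[of _ i]) auto
  then show ?thesis using quadratic_form_congruence_diag[OF D q(1)] by simp
qed

section \<open>Complex vectors and the largest singular value\<close>

definition csq_norm :: "complex vec \<Rightarrow> real" where
  "csq_norm v = (\<Sum>i<dim_vec v. (cmod (v $ i))^2)"

lemma csq_norm_nonneg: "0 \<le> csq_norm v"
  unfolding csq_norm_def by (intro sum_nonneg) auto

lemma csq_norm_Re_Im: "csq_norm z = map_vec Re z \<bullet> map_vec Re z + map_vec Im z \<bullet> map_vec Im z"
  unfolding csq_norm_def scalar_prod_def cmod_power2
  by (simp add: sum.distrib atLeast0LessThan power2_eq_square)

lemma cscalar_prod_self: "v \<bullet>c v = complex_of_real (csq_norm v)"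
  unfolding csq_norm_def scalar_prod_def of_real_sum
  by (intro sum.cong) (simp_all add: atLeast0LessThan complex_norm_square[symmetric])

lemma csq_norm_pos:
  assumes "v \<in> carrier_vec k" "v \<noteq> 0\<^sub>v k"
  shows "0 < csq_norm v"
proof -
  have "0 < v \<bullet>c v" using assms by simp
  then show ?thesis unfolding cscalar_prod_self by (simp add: less_complex_def)
qed

lemma map_vec_Re_Im_eq_0:
  assumes "z \<in> carrier_vec k" "map_vec Re z = 0\<^sub>v k" "map_vec Im z = 0\<^sub>v k"
  shows "z = 0\<^sub>v k"
  using assms by (auto simp: vec_eq_iff complex_eq_iff)

lemma dim_mat_adjoint[simp]:
  "dim_row (mat_adjoint A) = dim_col A" "dim_col (mat_adjoint A) = dim_row A"
  by (simp_all add: mat_adjoint_def mat_of_rows_def)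

lemma mat_adjoint_carrier[simp]: "A \<in> carrier_mat r c \<Longrightarrow> mat_adjoint A \<in> carrier_mat c r"
  by (intro carrier_matI) (simp_all add: carrier_matD)

lemma index_mat_adjoint[simp]:
  fixes A :: "complex mat"
  assumes "i < dim_col A" "j < dim_row A"
  shows "mat_adjoint A $$ (i, j) = cnj (A $$ (j, i))"
  using assms unfolding mat_adjoint_def mat_of_rows_def by (simp add: conjugate_complex_def)

lemma mat_adjoint_adjoint: "mat_adjoint (mat_adjoint A) = (A :: complex mat)"
  by (rule eq_matI) auto

lemma mat_adjoint_mult:
  fixes A B :: "complex mat"
  assumes A: "A \<in> carrier_mat r k" and B: "B \<in> carrier_mat k c"
  shows "mat_adjoint (A * B) = mat_adjoint B * mat_adjoint A"
  using A B by (intro eq_matI) (auto simp: scalar_prod_def conjugate_complex_def ac_simps)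

lemma mat_adjoint_of_real: "mat_adjoint (map_mat complex_of_real M) = map_mat complex_of_real M\<^sup>T"
  by (rule eq_matI) auto

lemma mat_adjoint_one: "mat_adjoint (1\<^sub>m k :: complex mat) = 1\<^sub>m k"
  by (rule eq_matI) auto

lemma cscalar_prod_mat_adjoint:
  fixes A :: "complex mat"
  assumes A: "A \<in> carrier_mat r c" and x: "x \<in> carrier_vec c" and y: "y \<in> carrier_vec r"
  shows "(A *\<^sub>v x) \<bullet>c y = x \<bullet>c (mat_adjoint A *\<^sub>v y)"
proof -
  have "(A *\<^sub>v x) \<bullet>c y = (\<Sum>i<r. (\<Sum>j<c. A $$ (i, j) * x $ j) * cnj (y $ i))"
    using A x y by (simp add: scalar_prod_def atLeast0LessThan conjugate_complex_def)
  also have "\<dots> = (\<Sum>j<c. \<Sum>i<r. A $$ (i, j) * x $ j * cnj (y $ i))"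
    by (simp add: sum_distrib_right sum.swap[of _ "{..<r}"])
  also have "\<dots> = (\<Sum>j<c. x $ j * cnj (\<Sum>i<r. cnj (A $$ (i, j)) * y $ i))"
    by (simp add: sum_distrib_left ac_simps)
  also have "\<dots> = x \<bullet>c (mat_adjoint A *\<^sub>v y)"
    using A x y by (simp add: scalar_prod_def atLeast0LessThan conjugate_complex_def)
  finally show ?thesis .
qed

lemma map_vec_Re_Im_mult_of_real:
  fixes M :: "real mat"
  assumes M: "M \<in> carrier_mat r c" and z: "z \<in> carrier_vec c"
  shows "map_vec Re (map_mat complex_of_real M *\<^sub>v z) = M *\<^sub>v map_vec Re z"
    and "map_vec Im (map_mat complex_of_real M *\<^sub>v z) = M *\<^sub>v map_vec Im z"
  using M z by (auto intro!: eq_vecI simp: scalar_prod_def Re_sum Im_sum)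

lemma gram_eigenvector_eigenvalue:
  fixes S :: "complex mat"
  assumes S: "S \<in> carrier_mat r c" and v: "eigenvector (mat_adjoint S * S) v x"
  shows "x = complex_of_real (csq_norm (S *\<^sub>v v) / csq_norm v)"
proof -
  have v: "v \<in> carrier_vec c" "v \<noteq> 0\<^sub>v c" "mat_adjoint S *\<^sub>v (S *\<^sub>v v) = x \<cdot>\<^sub>v v"
    using v S assoc_mult_mat_vec[OF mat_adjoint_carrier[OF S] S] unfolding eigenvector_def
    by (auto simp: carrier_matD)
  have "x * (v \<bullet>c v) = (x \<cdot>\<^sub>v v) \<bullet>c v"
    using v(1) by (simp add: smult_scalar_prod_distrib[of _ c])
  also have "\<dots> = (S *\<^sub>v v) \<bullet>c (S *\<^sub>v v)"
    using cscalar_prod_mat_adjoint[of "mat_adjoint S" c r "S *\<^sub>v v" v] S v(1,3)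
    by (simp add: mat_adjoint_adjoint)
  finally have "x * complex_of_real (csq_norm v) = complex_of_real (csq_norm (S *\<^sub>v v))"
    unfolding cscalar_prod_self .
  moreover have "csq_norm v \<noteq> 0" using csq_norm_pos[OF v(1,2)] by simp
  ultimately show ?thesis by (simp add: of_real_divide eq_divide_eq)
qed

lemma finite_real_eigenvalues:
  assumes "A \<in> carrier_mat k k"
  shows "finite {x::real. eigenvalue A (complex_of_real x)}"
proof -
  have "finite (complex_of_real -` {z. eigenvalue A z})"
    using eigenvalues_finite[OF assms] inj_of_real by (rule finite_vimageI)
  then show ?thesis by (simp add: vimage_def)
qed

text \<open>\<open>Max T\<close>, and hence \<open>sigma_max S\<close>, is only meaningful because \<open>T\<close> is nonempty, which
  follows from the fundamental theorem of algebra.\<close>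
lemma sigma_max_sq:
  fixes S :: "complex mat"
  assumes S: "S \<in> carrier_mat r c" and c: "0 < c"
  defines "T \<equiv> {x::real. eigenvalue (mat_adjoint S * S) (complex_of_real x)}"
  shows "finite T" and "T \<noteq> {}" and "\<And>x. x \<in> T \<Longrightarrow> 0 \<le> x" and "sigma_max S ^ 2 = Max T"
    and "0 \<le> sigma_max S"
proof -
  define G where "G = mat_adjoint S * S"
  have G: "G \<in> carrier_mat c c" unfolding G_def using S by auto
  have real: "\<exists>x\<ge>0. z = complex_of_real x" if eig: "eigenvalue G z" for z
  proof -
    obtain v where v: "eigenvector (mat_adjoint S * S) v z" using eig unfolding eigenvalue_def G_def by auto
    have "0 \<le> csq_norm (S *\<^sub>v v) / csq_norm v" by (intro divide_nonneg_nonneg csq_norm_nonneg)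
    with gram_eigenvector_eigenvalue[OF S v] show ?thesis by blast
  qed
  show fin: "finite T" unfolding T_def G_def[symmetric] by (rule finite_real_eigenvalues[OF G])
  show nonneg: "0 \<le> x" if "x \<in> T" for x
    using real[of "complex_of_real x"] that unfolding T_def G_def by auto
  have "\<not> constant (poly (char_poly G))" using degree_monic_char_poly[OF G] c by (simp add: constant_degree)
  then obtain z where "poly (char_poly G) z = 0" using fundamental_theorem_of_algebra by blast
  then have "eigenvalue G z" using eigenvalue_root_char_poly[OF G] by simp
  with real show ne: "T \<noteq> {}" unfolding T_def G_def by auto
  show "sigma_max S ^ 2 = Max T" "0 \<le> sigma_max S"
    using nonneg[OF Max_in[OF fin ne]] unfolding sigma_max_def T_def by simp_all
qed

text \<open>Nonzero eigenvalues of \<open>S\<^sup>H S\<close> are eigenvalues of \<open>S S\<^sup>H\<close>, whose Rayleigh quotients are the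
  ratios \<open>|S\<^sup>H u|\<^sup>2 / |u|\<^sup>2\<close>.\<close>
lemma sigma_max_sq_le:
  fixes S :: "complex mat"
  assumes S: "S \<in> carrier_mat r c" and c: "0 < c" and U: "0 \<le> U"
    and bound: "\<And>u. u \<in> carrier_vec r \<Longrightarrow> csq_norm (mat_adjoint S *\<^sub>v u) \<le> U * csq_norm u"
  shows "sigma_max S ^ 2 \<le> U"
proof -
  define T where "T = {x::real. eigenvalue (mat_adjoint S * S) (complex_of_real x)}"
  note T = sigma_max_sq[OF S c, folded T_def]
  have "x \<le> U" if x: "x \<in> T" for x
  proof (cases "x = 0")
    case False
    have "eigenvalue (mat_adjoint (mat_adjoint S) * mat_adjoint S) (complex_of_real x)"
      using eigenvalue_mult_swap[of "mat_adjoint S" c r S "complex_of_real x"] x False S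
      unfolding T_def by (simp add: mat_adjoint_adjoint)
    then obtain u where u: "eigenvector (mat_adjoint (mat_adjoint S) * mat_adjoint S) u (complex_of_real x)"
      unfolding eigenvalue_def by blast
    then have "u \<in> carrier_vec r" "u \<noteq> 0\<^sub>v r" using S unfolding eigenvector_def by auto
    then have "0 < csq_norm u" by (rule csq_norm_pos)
    moreover have "x = csq_norm (mat_adjoint S *\<^sub>v u) / csq_norm u"
      using gram_eigenvector_eigenvalue[OF mat_adjoint_carrier[OF S] u] by (simp only: of_real_eq_iff)
    ultimately show ?thesis using bound[OF \<open>u \<in> carrier_vec r\<close>] by (simp add: divide_le_eq)
  qed (use U in simp)
  then show ?thesis using T(4) Max_in[OF T(1,2)] by simp
qed

text \<open>The largest eigenvalue of \<open>S S\<^sup>T\<close>, if positive, is also an eigenvalue of \<open>S\<^sup>T S\<close>.\<close>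
lemma sigma_max_of_real_sq_ge:
  fixes S :: "real mat"
  assumes S: "S \<in> carrier_mat r c" and r: "0 < r" and y: "y \<in> carrier_vec r"
  shows "(S\<^sup>T *\<^sub>v y) \<bullet> (S\<^sup>T *\<^sub>v y) \<le> sigma_max (map_mat complex_of_real S) ^ 2 * (y \<bullet> y)"
proof -
  define G where "G = S * S\<^sup>T"
  have G: "G \<in> carrier_mat r r" and G_sym: "G\<^sup>T = G"
    unfolding G_def using S by (auto simp: transpose_mult[of S r c] transpose_transpose)
  have "(S\<^sup>T *\<^sub>v y) \<bullet> (S\<^sup>T *\<^sub>v y) = y \<bullet> (G *\<^sub>v y)"
    unfolding G_def using S y transpose_vec_mult_scalar[of S r c "S\<^sup>T *\<^sub>v y" y] by simp
  also have "\<dots> \<le> lambda_max G * (y \<bullet> y)" by (rule symmetric_extreme_eigenvalues(3)[OF G G_sym r y])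
  also have "\<dots> \<le> sigma_max (map_mat complex_of_real S) ^ 2 * (y \<bullet> y)"
  proof (intro mult_right_mono scalar_prod_self_nonneg)
    show "lambda_max G \<le> sigma_max (map_mat complex_of_real S) ^ 2"
    proof (cases "lambda_max G \<le> 0")
      case False
      define T where "T = {x::real. eigenvalue (mat_adjoint (map_mat complex_of_real S) *
        map_mat complex_of_real S) (complex_of_real x)}"
      have "eigenvalue (S\<^sup>T * S) (lambda_max G)"
        using eigenvalue_mult_swap[of S r c "S\<^sup>T"] symmetric_extreme_eigenvalues(1)[OF G G_sym r] False S
        unfolding G_def by simp
      then have "eigenvalue (map_mat complex_of_real (S\<^sup>T * S)) (complex_of_real (lambda_max G))"
        using S by (intro of_real_hom.eigenvalue_hom[of _ c]) auto
      then have T: "lambda_max G \<in> T"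
        unfolding T_def mat_adjoint_of_real using S by (simp add: of_real_hom.mat_hom_mult[of _ c r _ c])
      have "finite T" unfolding T_def using S by (intro finite_real_eigenvalues[of _ c]) auto
      then have "lambda_max G \<le> Max T" "0 \<le> Max T" using T False by (auto intro: Max_ge order_trans)
      then show ?thesis unfolding sigma_max_def T_def by simp
    qed (use zero_le_power2[of "sigma_max (map_mat complex_of_real S)"] in linarith)
  qed
  finally show ?thesis .
qed

lemma cSUP_power2_bounds:
  fixes f :: "'a \<Rightarrow> real"
  assumes nonneg: "\<And>x. 0 \<le> f x" and bound: "\<And>x. f x ^ 2 \<le> U"
  shows "(SUP x. f x) ^ 2 \<le> U" and "f z ^ 2 \<le> (SUP x. f x) ^ 2"
proof -
  have le: "f x \<le> sqrt U" for x using bound[of x] nonneg[of x] by (simp add: real_le_rsqrt)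
  then have bdd: "bdd_above (range f)" by (intro bdd_aboveI) auto
  have upper: "f z \<le> (SUP x. f x)" by (rule cSUP_upper[OF _ bdd]) simp
  show "f z ^ 2 \<le> (SUP x. f x) ^ 2" using upper nonneg[of z] by (intro power_mono) auto
  have "(SUP x. f x) \<le> sqrt U" using le by (intro cSUP_least) auto
  then have "(SUP x. f x) ^ 2 \<le> sqrt U ^ 2" using upper nonneg[of z] by (intro power_mono) auto
  then show "(SUP x. f x) ^ 2 \<le> U" using bound[of z] by (simp add: order_trans[OF zero_le_power2])
qed

section \<open>Weighted Laplacian systems\<close>

locale laplacian_system =
  fixes m k :: nat and L B :: "real mat" and w :: "nat \<Rightarrow> real" and \<sigma>w \<sigma>v :: real
  assumes m_pos: "0 < m" and k_pos: "0 < k"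
    and L_carrier: "L \<in> carrier_mat m m" and L_sym: "L\<^sup>T = L"
    and L_pos_def: "\<And>q. q \<in> carrier_vec m \<Longrightarrow> q \<noteq> 0\<^sub>v m \<Longrightarrow> 0 < q \<bullet> (L *\<^sub>v q)"
    and w_pos: "\<And>l. l < m \<Longrightarrow> 0 < w l"
    and B_carrier: "B \<in> carrier_mat m k"
    and B_norm: "\<And>q. q \<in> carrier_vec m \<Longrightarrow> (B\<^sup>T *\<^sub>v q) \<bullet> (B\<^sup>T *\<^sub>v q)
      = \<sigma>w\<^sup>2 * (q \<bullet> (L *\<^sub>v q)) + \<sigma>v\<^sup>2 * (\<Sum>l<m. w l * ((L *\<^sub>v q) $ l)\<^sup>2)"
begin

definition "W = mat_diag m w"

definition "Wh = mat_diag m (\<lambda>l. sqrt (w l))"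

definition "pencil s = s \<cdot>\<^sub>m 1\<^sub>m m + map_mat complex_of_real (L * W)"

definition "transfer s = mat_inv (pencil s) * map_mat complex_of_real B"

definition "bound_L1 = (\<sigma>w\<^sup>2 + \<sigma>v\<^sup>2 * lambda_min L * lambda_max Wh ^ 2) / (lambda_min L * lambda_max Wh ^ 4)"

definition "bound_L2 = (\<sigma>w\<^sup>2 + \<sigma>v\<^sup>2 * lambda_max L * lambda_max Wh * lambda_min Wh)
  / (lambda_max L * lambda_max Wh ^ 3 * lambda_min Wh)"

definition "bound_U = (\<sigma>w\<^sup>2 + \<sigma>v\<^sup>2 * lambda_min L * lambda_min Wh ^ 2) / (lambda_min L * lambda_min Wh ^ 4)"

lemma W_carrier[simp]: "W \<in> carrier_mat m m"
  by (simp add: W_def)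

lemma dim_W[simp]: "dim_row W = m" "dim_col W = m"
  by (simp_all add: W_def mat_diag_def)

lemma W_mult_vec: "v \<in> carrier_vec m \<Longrightarrow> W *\<^sub>v v = vec m (\<lambda>i. w i * v $ i)"
  unfolding W_def by (rule mat_diag_mult_vec)

lemma dim_L[simp]: "dim_row L = m" "dim_col L = m"
  using L_carrier by auto

lemma LW_carrier[simp]: "L * W \<in> carrier_mat m m"
  using L_carrier by simp

lemma transpose_LW: "(L * W)\<^sup>T = W * L"
  using transpose_mult[OF L_carrier W_carrier] L_sym by (simp add: W_def mat_diag_transpose)

lemmas L_extreme = symmetric_extreme_eigenvalues[OF L_carrier L_sym m_pos]

lemma L_kernel: "q \<in> carrier_vec m \<Longrightarrow> L *\<^sub>v q = 0\<^sub>v m \<Longrightarrow> q = 0\<^sub>v m"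
  using L_pos_def by force

lemma lambda_min_L_pos: "0 < lambda_min L"
proof -
  obtain v where v: "v \<in> carrier_vec m" "v \<noteq> 0\<^sub>v m" "L *\<^sub>v v = lambda_min L \<cdot>\<^sub>v v"
    using L_extreme(2) L_carrier unfolding eigenvalue_def eigenvector_def by auto
  have "v \<bullet> (L *\<^sub>v v) = lambda_min L * (v \<bullet> v)" using v by (simp add: scalar_prod_smult_distrib[of _ m])
  then show ?thesis using L_pos_def[OF v(1,2)] scalar_prod_self_pos[OF v(1,2)]
    by (simp add: zero_less_mult_iff)
qed

lemma lambda_max_L_pos: "0 < lambda_max L"
  using lambda_min_L_pos L_extreme(5) by simp

lemma L_psd:
  assumes "q \<in> carrier_vec m"
  shows "0 \<le> q \<bullet> (L *\<^sub>v q)"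
proof -
  have "0 \<le> lambda_min L * (q \<bullet> q)"
    using lambda_min_L_pos scalar_prod_self_nonneg[of q] by simp
  then show ?thesis using L_extreme(4)[OF assms] by linarith
qed

text \<open>From \<open>(q \<bullet> L q)\<^sup>2 \<le> |q|\<^sup>2 |L q|\<^sup>2\<close> and \<open>\<lambda>\<^sub>m\<^sub>i\<^sub>n(L) |q|\<^sup>2 \<le> q \<bullet> L q\<close>.\<close>
lemma quadratic_form_L_le:
  assumes q: "q \<in> carrier_vec m"
  shows "q \<bullet> (L *\<^sub>v q) \<le> ((L *\<^sub>v q) \<bullet> (L *\<^sub>v q)) / lambda_min L"
proof (cases "q \<bullet> (L *\<^sub>v q) = 0")
  case False
  then have pos: "0 < q \<bullet> (L *\<^sub>v q)" using L_psd[OF q] by simp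
  have "q \<bullet> q \<le> q \<bullet> (L *\<^sub>v q) / lambda_min L"
    using L_extreme(4)[OF q] lambda_min_L_pos by (simp add: field_simps)
  then have "(q \<bullet> q) * ((L *\<^sub>v q) \<bullet> (L *\<^sub>v q))
      \<le> (q \<bullet> (L *\<^sub>v q) / lambda_min L) * ((L *\<^sub>v q) \<bullet> (L *\<^sub>v q))"
    using scalar_prod_self_nonneg by (rule mult_right_mono)
  then have "(q \<bullet> (L *\<^sub>v q))^2 \<le> (q \<bullet> (L *\<^sub>v q) / lambda_min L) * ((L *\<^sub>v q) \<bullet> (L *\<^sub>v q))"
    using cauchy_schwarz_vec[OF q, of "L *\<^sub>v q"] L_carrier q by simp
  then show ?thesis using pos lambda_min_L_pos by (simp add: power2_eq_square field_simps)
qed (use scalar_prod_self_nonneg[of "L *\<^sub>v q"] lambda_min_L_pos in simp)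

lemma Wh_bounds:
  shows "\<And>l. l < m \<Longrightarrow> lambda_min Wh ^ 2 \<le> w l \<and> w l \<le> lambda_max Wh ^ 2"
    and "\<exists>l<m. w l = lambda_min Wh ^ 2"
    and "0 < lambda_min Wh" and "lambda_min Wh \<le> lambda_max Wh"
proof -
  let ?S = "(\<lambda>l. sqrt (w l)) ` {..<m}"
  have fin: "finite ?S" and ne: "?S \<noteq> {}" using m_pos by auto
  have max: "lambda_max Wh = Max ?S" and min: "lambda_min Wh = Min ?S"
    unfolding Wh_def by (rule lambda_max_mat_diag lambda_min_mat_diag)+
  obtain l0 where l0: "l0 < m" "sqrt (w l0) = lambda_min Wh" using Min_in[OF fin ne] min by auto
  show pos: "0 < lambda_min Wh" using l0 w_pos[OF l0(1)] by (metis real_sqrt_gt_zero)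
  have "w l0 = sqrt (w l0) ^ 2" using w_pos[OF l0(1)] by simp
  then have "w l0 = lambda_min Wh ^ 2" unfolding l0(2) .
  then show "\<exists>l<m. w l = lambda_min Wh ^ 2" using l0(1) by blast
  have between: "lambda_min Wh \<le> sqrt (w l) \<and> sqrt (w l) \<le> lambda_max Wh" if "l < m" for l
    unfolding max min using fin that by auto
  show "lambda_min Wh ^ 2 \<le> w l \<and> w l \<le> lambda_max Wh ^ 2" if l: "l < m" for l
  proof -
    have "w l = sqrt (w l) ^ 2" using w_pos[OF l] by simp
    then show ?thesis using between[OF l] pos by (metis power_mono less_imp_le order_trans)
  qed
  show "lambda_min Wh \<le> lambda_max Wh" using between[OF l0(1)] by simp
qed

lemma lambda_max_Wh_pos: "0 < lambda_max Wh"
  using Wh_bounds(3,4) by simp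

lemma bound_U_nonneg: "0 \<le> bound_U"
  unfolding bound_U_def using lambda_min_L_pos Wh_bounds(3)
  by (intro divide_nonneg_pos add_nonneg_nonneg) auto

text \<open>The cross terms cancel because \<open>L\<close> is symmetric; the estimate then follows from
  \<open>\<lambda>\<^sub>m\<^sub>i\<^sub>n(W\<^sup>1\<^sup>/\<^sup>2)\<^sup>2 \<le> w\<^sub>i\<close>, applied once to divide by and once to multiply with \<open>w\<^sub>i\<close>.\<close>
lemma adjoint_pencil_energy_ge:
  assumes qa: "qa \<in> carrier_vec m" and qb: "qb \<in> carrier_vec m"
  shows "lambda_min Wh ^ 2 * (\<Sum>i<m. w i * (((L *\<^sub>v qa) $ i)\<^sup>2 + ((L *\<^sub>v qb) $ i)\<^sup>2))
    \<le> (\<Sum>i<m. (\<omega> * qb $ i + w i * (L *\<^sub>v qa) $ i)\<^sup>2 + (- \<omega> * qa $ i + w i * (L *\<^sub>v qb) $ i)\<^sup>2)"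
proof -
  define p where "p = L *\<^sub>v qa"
  define r where "r = L *\<^sub>v qb"
  define T where "T i = (\<omega> * qb $ i + w i * p $ i)\<^sup>2 + (- \<omega> * qa $ i + w i * r $ i)\<^sup>2" for i
  have p: "p \<in> carrier_vec m" and r: "r \<in> carrier_vec m"
    unfolding p_def r_def using L_carrier qa qb by auto
  have cross: "(\<Sum>i<m. qb $ i * p $ i) = (\<Sum>i<m. qa $ i * r $ i)"
    using symmetric_form_commute[OF L_carrier L_sym qa qb] scalar_prod_eq_sum[OF qb p]
      scalar_prod_eq_sum[OF qa r]
    unfolding p_def r_def by simp
  have T_div: "T i / w i = \<omega>\<^sup>2 * ((qa $ i)\<^sup>2 + (qb $ i)\<^sup>2) / w i + w i * ((p $ i)\<^sup>2 + (r $ i)\<^sup>2)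
      + 2 * \<omega> * (qb $ i * p $ i - qa $ i * r $ i)" if "i < m" for i
    using w_pos[OF that] unfolding T_def by (simp add: field_simps power2_eq_square)
  have "(\<Sum>i<m. T i / w i) = (\<Sum>i<m. \<omega>\<^sup>2 * ((qa $ i)\<^sup>2 + (qb $ i)\<^sup>2) / w i)
      + (\<Sum>i<m. w i * ((p $ i)\<^sup>2 + (r $ i)\<^sup>2))
      + 2 * \<omega> * ((\<Sum>i<m. qb $ i * p $ i) - (\<Sum>i<m. qa $ i * r $ i))"
    by (simp add: T_div sum.distrib sum_subtractf[symmetric] sum_distrib_left)
  also have "\<dots> \<ge> (\<Sum>i<m. w i * ((p $ i)\<^sup>2 + (r $ i)\<^sup>2))"
  proof -
    have "0 \<le> (\<Sum>i<m. \<omega>\<^sup>2 * ((qa $ i)\<^sup>2 + (qb $ i)\<^sup>2) / w i)"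
      using w_pos by (intro sum_nonneg divide_nonneg_pos) auto
    then show ?thesis using cross by simp
  qed
  finally have "lambda_min Wh ^ 2 * (\<Sum>i<m. w i * ((p $ i)\<^sup>2 + (r $ i)\<^sup>2))
      \<le> lambda_min Wh ^ 2 * (\<Sum>i<m. T i / w i)" by (simp add: mult_left_mono)
  also have "\<dots> \<le> (\<Sum>i<m. T i)" unfolding sum_distrib_left
  proof (intro sum_mono)
    fix i assume "i \<in> {..<m}"
    then have "0 < w i" "lambda_min Wh ^ 2 \<le> w i" using w_pos Wh_bounds(1) by auto
    moreover have "0 \<le> T i" unfolding T_def by simp
    ultimately show "lambda_min Wh ^ 2 * (T i / w i) \<le> T i"
      by (simp add: divide_le_eq mult.commute mult_left_mono)
  qed
  finally show ?thesis unfolding T_def p_def r_def .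
qed

lemma output_energy_le:
  assumes q: "q \<in> carrier_vec m"
  shows "\<sigma>w\<^sup>2 * (q \<bullet> (L *\<^sub>v q)) + \<sigma>v\<^sup>2 * (\<Sum>l<m. w l * ((L *\<^sub>v q) $ l)\<^sup>2)
    \<le> bound_U * lambda_min Wh ^ 2 * (\<Sum>l<m. w l * ((L *\<^sub>v q) $ l)\<^sup>2)"
proof -
  define p where "p = L *\<^sub>v q"
  have p: "p \<in> carrier_vec m" unfolding p_def using L_carrier q by simp
  have b: "0 < lambda_min Wh" by (rule Wh_bounds(3))
  have U: "bound_U * lambda_min Wh ^ 2 = \<sigma>w\<^sup>2 / (lambda_min L * lambda_min Wh ^ 2) + \<sigma>v\<^sup>2"
    unfolding bound_U_def using lambda_min_L_pos b by (simp add: field_simps power2_eq_square power4_eq_xxxx)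
  have "lambda_min Wh ^ 2 * (p \<bullet> p) \<le> (\<Sum>l<m. w l * (p $ l)\<^sup>2)"
    unfolding scalar_prod_self_eq_sum[OF p] sum_distrib_left
    using Wh_bounds(1) by (intro sum_mono mult_right_mono) auto
  then have "(p \<bullet> p) / lambda_min L \<le> (\<Sum>l<m. w l * (p $ l)\<^sup>2) / (lambda_min L * lambda_min Wh ^ 2)"
    using lambda_min_L_pos b by (simp add: field_simps)
  then have "q \<bullet> (L *\<^sub>v q) \<le> (\<Sum>l<m. w l * (p $ l)\<^sup>2) / (lambda_min L * lambda_min Wh ^ 2)"
    using quadratic_form_L_le[OF q] unfolding p_def[symmetric] by linarith
  then have "\<sigma>w\<^sup>2 * (q \<bullet> (L *\<^sub>v q)) \<le> \<sigma>w\<^sup>2 * ((\<Sum>l<m. w l * (p $ l)\<^sup>2) / (lambda_min L * lambda_min Wh ^ 2))"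
    by (rule mult_left_mono) simp
  then show ?thesis unfolding U p_def[symmetric] by (simp add: algebra_simps)
qed

lemma pencil_carrier[simp]: "pencil s \<in> carrier_mat m m"
  unfolding pencil_def by simp

lemma dim_pencil[simp]: "dim_row (pencil s) = m" "dim_col (pencil s) = m"
  using carrier_matD[OF pencil_carrier] by auto

lemma mat_adjoint_pencil: "mat_adjoint (pencil s) = cnj s \<cdot>\<^sub>m 1\<^sub>m m + map_mat complex_of_real (W * L)"
proof -
  have "mat_adjoint (pencil s) = cnj s \<cdot>\<^sub>m 1\<^sub>m m + map_mat complex_of_real ((L * W)\<^sup>T)"
    unfolding pencil_def using LW_carrier by (intro eq_matI) auto
  then show ?thesis unfolding transpose_LW .
qed

lemma csq_norm_adjoint_pencil:
  assumes z: "z \<in> carrier_vec m"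
  shows "csq_norm (mat_adjoint (pencil (\<i> * complex_of_real \<omega>)) *\<^sub>v z)
    = (\<Sum>i<m. (\<omega> * map_vec Im z $ i + w i * (L *\<^sub>v map_vec Re z) $ i)\<^sup>2
             + (- \<omega> * map_vec Re z $ i + w i * (L *\<^sub>v map_vec Im z) $ i)\<^sup>2)"
proof -
  let ?u = "mat_adjoint (pencil (\<i> * complex_of_real \<omega>)) *\<^sub>v z"
  have WL: "W * L \<in> carrier_mat m m" by (rule mult_carrier_mat[OF W_carrier L_carrier])
  have u: "?u = (- \<i> * complex_of_real \<omega>) \<cdot>\<^sub>v z + map_mat complex_of_real (W * L) *\<^sub>v z"
    unfolding mat_adjoint_pencil using z WL
    by (simp add: add_mult_distrib_mat_vec[of _ m m] smult_one_mult_vec)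
  have "map_vec Re ?u $ i = \<omega> * map_vec Im z $ i + w i * (L *\<^sub>v map_vec Re z) $ i"
    and "map_vec Im ?u $ i = - \<omega> * map_vec Re z $ i + w i * (L *\<^sub>v map_vec Im z) $ i" if "i < m" for i
  proof -
    have "map_vec Re (map_mat complex_of_real (W * L) *\<^sub>v z) = W *\<^sub>v (L *\<^sub>v map_vec Re z)"
      "map_vec Im (map_mat complex_of_real (W * L) *\<^sub>v z) = W *\<^sub>v (L *\<^sub>v map_vec Im z)"
      using map_vec_Re_Im_mult_of_real[OF WL z] L_carrier z
      by (simp_all add: assoc_mult_mat_vec[of W m m L m])
    then show "map_vec Re ?u $ i = \<omega> * map_vec Im z $ i + w i * (L *\<^sub>v map_vec Re z) $ i"
      and "map_vec Im ?u $ i = - \<omega> * map_vec Re z $ i + w i * (L *\<^sub>v map_vec Im z) $ i"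
      unfolding u using that z WL L_carrier
      by (auto dest!: arg_cong[where f = "\<lambda>v. v $ i"] simp: W_mult_vec)
  qed
  moreover have "?u \<in> carrier_vec m" by (rule mult_mat_vec_carrier[OF mat_adjoint_carrier[OF pencil_carrier] z])
  ultimately show ?thesis
    unfolding csq_norm_Re_Im by (simp add: scalar_prod_self_eq_sum[of _ m] sum.distrib)
qed

lemma adjoint_pencil_kernel:
  assumes z: "z \<in> carrier_vec m" and Xz: "mat_adjoint (pencil (\<i> * complex_of_real \<omega>)) *\<^sub>v z = 0\<^sub>v m"
  shows "z = 0\<^sub>v m"
proof -
  define qa where "qa = map_vec Re z"
  define qb where "qb = map_vec Im z"
  have qa: "qa \<in> carrier_vec m" and qb: "qb \<in> carrier_vec m" using z unfolding qa_def qb_def by auto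
  have "csq_norm (mat_adjoint (pencil (\<i> * complex_of_real \<omega>)) *\<^sub>v z) = 0"
    unfolding Xz csq_norm_def by simp
  then have "lambda_min Wh ^ 2 * (\<Sum>i<m. w i * (((L *\<^sub>v qa) $ i)\<^sup>2 + ((L *\<^sub>v qb) $ i)\<^sup>2)) \<le> 0"
    using adjoint_pencil_energy_ge[OF qa qb, of \<omega>] csq_norm_adjoint_pencil[OF z]
    unfolding qa_def qb_def by simp
  define f where "f i = w i * (((L *\<^sub>v qa) $ i)\<^sup>2 + ((L *\<^sub>v qb) $ i)\<^sup>2)" for i
  have "sum f {..<m} \<le> 0" using Wh_bounds(3) \<open>_ \<le> 0\<close> unfolding f_def by (simp add: mult_le_0_iff)
  moreover have nonneg: "0 \<le> f i" if "i \<in> {..<m}" for i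
    unfolding f_def using w_pos that by (intro mult_nonneg_nonneg add_nonneg_nonneg) (auto simp: less_imp_le)
  ultimately have "sum f {..<m} = 0" using sum_nonneg[of "{..<m}" f, OF nonneg] by linarith
  then have "\<forall>i\<in>{..<m}. f i = 0" using sum_nonneg_eq_0_iff[of "{..<m}" f] nonneg by simp
  then have "(L *\<^sub>v qa) $ i = 0 \<and> (L *\<^sub>v qb) $ i = 0" if i: "i < m" for i
  proof -
    have "w i * (((L *\<^sub>v qa) $ i)\<^sup>2 + ((L *\<^sub>v qb) $ i)\<^sup>2) = 0"
      using \<open>\<forall>i\<in>{..<m}. f i = 0\<close> i unfolding f_def by blast
    with w_pos[OF i] show ?thesis by (simp add: sum_power2_eq_zero_iff)
  qed
  then have "L *\<^sub>v qa = 0\<^sub>v m" "L *\<^sub>v qb = 0\<^sub>v m" by (auto intro!: eq_vecI)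
  then show ?thesis using map_vec_Re_Im_eq_0[OF z] L_kernel[OF qa] L_kernel[OF qb]
    unfolding qa_def qb_def by simp
qed

text \<open>The inverse is built from the adjoint pencil, whose kernel is controlled by
  \<open>adjoint_pencil_energy_ge\<close>.\<close>
lemma pencil_inverse:
  obtains P where "P \<in> carrier_mat m m" "mat_adjoint (pencil (\<i> * complex_of_real \<omega>)) * P = 1\<^sub>m m"
    "mat_inv (pencil (\<i> * complex_of_real \<omega>)) = mat_adjoint P"
proof -
  let ?X = "pencil (\<i> * complex_of_real \<omega>)"
  obtain P where P: "P \<in> carrier_mat m m" "mat_adjoint ?X * P = 1\<^sub>m m" "P * mat_adjoint ?X = 1\<^sub>m m"
    using inverse_exists_if_kernel_trivial[OF mat_adjoint_carrier[OF pencil_carrier]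
        adjoint_pencil_kernel[of _ \<omega>]]
    by blast
  have "?X * mat_adjoint P = mat_adjoint (P * mat_adjoint ?X)"
    using mat_adjoint_mult[OF P(1) mat_adjoint_carrier[OF pencil_carrier]] by (simp add: mat_adjoint_adjoint)
  also have "\<dots> = 1\<^sub>m m" unfolding P(3) by (rule mat_adjoint_one)
  finally have "mat_inv ?X = mat_adjoint P" using P(1) by (intro mat_inv_eqI[of _ m]) auto
  with P show ?thesis by (intro that) auto
qed

lemma transfer_carrier: "transfer (\<i> * complex_of_real \<omega>) \<in> carrier_mat m k"
proof -
  obtain P where "P \<in> carrier_mat m m" "mat_inv (pencil (\<i> * complex_of_real \<omega>)) = mat_adjoint P"
    using pencil_inverse by blast
  then show ?thesis unfolding transfer_def
    using mult_carrier_mat[OF mat_adjoint_carrier, of P m m "map_mat complex_of_real B" k] B_carrier by simp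
qed

lemma transfer_adjoint_bound:
  assumes u: "u \<in> carrier_vec m"
  shows "csq_norm (mat_adjoint (transfer (\<i> * complex_of_real \<omega>)) *\<^sub>v u) \<le> bound_U * csq_norm u"
proof -
  let ?X = "pencil (\<i> * complex_of_real \<omega>)"
  obtain P where P: "P \<in> carrier_mat m m" "mat_adjoint ?X * P = 1\<^sub>m m" "mat_inv ?X = mat_adjoint P"
    using pencil_inverse by blast
  define q where "q = P *\<^sub>v u"
  have q: "q \<in> carrier_vec m" unfolding q_def using P(1) u by simp
  define qa where "qa = map_vec Re q"
  define qb where "qb = map_vec Im q"
  have qa: "qa \<in> carrier_vec m" and qb: "qb \<in> carrier_vec m" using q unfolding qa_def qb_def by auto
  have BT: "B\<^sup>T \<in> carrier_mat k m" using B_carrier by simp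
  have "mat_adjoint (transfer (\<i> * complex_of_real \<omega>)) = map_mat complex_of_real B\<^sup>T * P"
    unfolding transfer_def P(3) using mat_adjoint_mult[of "mat_adjoint P" m m "map_mat complex_of_real B" k]
      P(1) B_carrier by (simp add: mat_adjoint_adjoint mat_adjoint_of_real)
  then have "mat_adjoint (transfer (\<i> * complex_of_real \<omega>)) *\<^sub>v u = map_mat complex_of_real B\<^sup>T *\<^sub>v q"
    unfolding q_def using P(1) BT u by simp
  then have "csq_norm (mat_adjoint (transfer (\<i> * complex_of_real \<omega>)) *\<^sub>v u)
      = (B\<^sup>T *\<^sub>v qa) \<bullet> (B\<^sup>T *\<^sub>v qa) + (B\<^sup>T *\<^sub>v qb) \<bullet> (B\<^sup>T *\<^sub>v qb)"
    unfolding csq_norm_Re_Im qa_def qb_def using map_vec_Re_Im_mult_of_real[OF BT q] by simp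
  also have "\<dots> \<le> bound_U * (lambda_min Wh ^ 2 * (\<Sum>i<m. w i * (((L *\<^sub>v qa) $ i)\<^sup>2 + ((L *\<^sub>v qb) $ i)\<^sup>2)))"
    using output_energy_le[OF qa] output_energy_le[OF qb]
    unfolding B_norm[OF qa] B_norm[OF qb] by (simp add: algebra_simps sum.distrib)
  also have "\<dots> \<le> bound_U * csq_norm (mat_adjoint ?X *\<^sub>v q)"
    using adjoint_pencil_energy_ge[OF qa qb] csq_norm_adjoint_pencil[OF q] bound_U_nonneg
    unfolding qa_def qb_def by (simp add: mult_left_mono)
  also have "mat_adjoint ?X *\<^sub>v q = u"
    unfolding q_def using P(1,2) u by (simp add: assoc_mult_mat_vec[symmetric, of _ m m])
  finally show ?thesis .
qed

lemma sigma_max_transfer_le: "sigma_max (transfer (\<i> * complex_of_real \<omega>)) ^ 2 \<le> bound_U"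
  by (rule sigma_max_sq_le[OF transfer_carrier k_pos bound_U_nonneg transfer_adjoint_bound])

lemma LW_inverse:
  obtains N where "N \<in> carrier_mat m m" "L * W * N = 1\<^sub>m m"
proof -
  have "x = 0\<^sub>v m" if x: "x \<in> carrier_vec m" and LWx: "(L * W) *\<^sub>v x = 0\<^sub>v m" for x
  proof -
    have "L *\<^sub>v (W *\<^sub>v x) = 0\<^sub>v m" using LWx assoc_mult_mat_vec[OF L_carrier W_carrier x] by simp
    then have "W *\<^sub>v x = 0\<^sub>v m" using L_kernel[OF mult_mat_vec_carrier[OF W_carrier x]] by simp
    then show ?thesis using x w_pos by (auto simp: W_mult_vec vec_eq_iff) (metis less_irrefl)
  qed
  then show ?thesis using inverse_exists_if_kernel_trivial[OF LW_carrier] that by blast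
qed

lemma transfer_zero:
  assumes N: "N \<in> carrier_mat m m" "L * W * N = 1\<^sub>m m"
  shows "transfer 0 = map_mat complex_of_real (N * B)"
proof -
  have "pencil 0 = map_mat complex_of_real (L * W)"
    unfolding pencil_def by (intro eq_matI) auto
  moreover have "map_mat complex_of_real (L * W) * map_mat complex_of_real N = 1\<^sub>m m"
    using of_real_hom.mat_hom_mult[OF LW_carrier N(1), symmetric] N(2)
    by (simp add: of_real_hom.mat_hom_one)
  ultimately have "mat_inv (pencil 0) = map_mat complex_of_real N"
    using N(1) by (intro mat_inv_eqI[of _ m]) auto
  then show ?thesis
    unfolding transfer_def by (simp add: of_real_hom.mat_hom_mult[OF N(1) B_carrier])
qed

text \<open>At \<open>s = 0\<close> the transfer matrix \<open>(L W)\<^sup>-\<^sup>1 B\<close> is real, and \<open>W L q\<close> is mapped by its transpose to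
  \<open>B\<^sup>T q\<close>.\<close>
lemma output_energy_le_sigma_max_transfer_zero:
  assumes q: "q \<in> carrier_vec m"
  shows "(B\<^sup>T *\<^sub>v q) \<bullet> (B\<^sup>T *\<^sub>v q) \<le> sigma_max (transfer 0) ^ 2 * ((W *\<^sub>v (L *\<^sub>v q)) \<bullet> (W *\<^sub>v (L *\<^sub>v q)))"
proof -
  obtain N where N: "N \<in> carrier_mat m m" "L * W * N = 1\<^sub>m m" by (rule LW_inverse)
  have NB: "N * B \<in> carrier_mat m k" using N(1) B_carrier by simp
  have "N\<^sup>T *\<^sub>v (W *\<^sub>v (L *\<^sub>v q)) = (L * W * N)\<^sup>T *\<^sub>v q"
  proof -
    have "N\<^sup>T \<in> carrier_mat m m" using N(1) by simp
    then show ?thesis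
      using transpose_mult[OF LW_carrier N(1)] transpose_LW q
        assoc_mult_mat_vec[OF _ mult_carrier_mat[OF W_carrier L_carrier] q]
        assoc_mult_mat_vec[OF W_carrier L_carrier q] by simp
  qed
  moreover have "B\<^sup>T \<in> carrier_mat k m" "N\<^sup>T \<in> carrier_mat m m" using B_carrier N(1) by auto
  moreover have y: "W *\<^sub>v (L *\<^sub>v q) \<in> carrier_vec m"
    by (intro mult_mat_vec_carrier[OF W_carrier] mult_mat_vec_carrier[OF L_carrier] q)
  ultimately have BT: "(N * B)\<^sup>T *\<^sub>v (W *\<^sub>v (L *\<^sub>v q)) = B\<^sup>T *\<^sub>v q"
    using transpose_mult[OF N(1) B_carrier] N(2) q assoc_mult_mat_vec[of "B\<^sup>T" k m "N\<^sup>T" m] by simp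
  show ?thesis
    using sigma_max_of_real_sq_ge[OF NB m_pos y] unfolding transfer_zero[OF N] BT .
qed

lemma eigenvector_output_energy:
  assumes q: "q \<in> carrier_vec m" and Lq: "L *\<^sub>v q = c \<cdot>\<^sub>v q"
  shows "(W *\<^sub>v (L *\<^sub>v q)) \<bullet> (W *\<^sub>v (L *\<^sub>v q)) = (\<Sum>i<m. (w i)\<^sup>2 * c\<^sup>2 * (q $ i)\<^sup>2)"
    and "(B\<^sup>T *\<^sub>v q) \<bullet> (B\<^sup>T *\<^sub>v q) = (\<Sum>i<m. \<sigma>w\<^sup>2 * c * (q $ i)\<^sup>2 + \<sigma>v\<^sup>2 * c\<^sup>2 * (q $ i)\<^sup>2 * w i)"
proof -
  have y: "W *\<^sub>v (L *\<^sub>v q) = vec m (\<lambda>i. w i * (c * q $ i))"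
    using q Lq by (intro eq_vecI) (auto simp: W_mult_vec)
  show "(W *\<^sub>v (L *\<^sub>v q)) \<bullet> (W *\<^sub>v (L *\<^sub>v q)) = (\<Sum>i<m. (w i)\<^sup>2 * c\<^sup>2 * (q $ i)\<^sup>2)"
    unfolding y by (simp add: scalar_prod_self_eq_sum[of _ m] power_mult_distrib mult.assoc)
  have "q \<bullet> (L *\<^sub>v q) = c * (\<Sum>i<m. (q $ i)\<^sup>2)"
    unfolding Lq using q by (simp add: scalar_prod_smult_distrib[of _ m] scalar_prod_self_eq_sum)
  moreover have "(\<Sum>l<m. w l * ((L *\<^sub>v q) $ l)\<^sup>2) = (\<Sum>i<m. c\<^sup>2 * (q $ i)\<^sup>2 * w i)"
    unfolding Lq using q by (intro sum.cong) (simp_all add: power_mult_distrib)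
  ultimately show "(B\<^sup>T *\<^sub>v q) \<bullet> (B\<^sup>T *\<^sub>v q)
      = (\<Sum>i<m. \<sigma>w\<^sup>2 * c * (q $ i)\<^sup>2 + \<sigma>v\<^sup>2 * c\<^sup>2 * (q $ i)\<^sup>2 * w i)"
    unfolding B_norm[OF q] by (simp add: sum.distrib sum_distrib_left mult.assoc)
qed

lemma bound_L1_le: "bound_L1 \<le> sigma_max (transfer 0) ^ 2"
proof -
  define c where "c = lambda_min L"
  define a where "a = lambda_max Wh"
  have c: "0 < c" unfolding c_def by (rule lambda_min_L_pos)
  have a: "0 < a" unfolding a_def by (rule lambda_max_Wh_pos)
  obtain q where q: "q \<in> carrier_vec m" "q \<noteq> 0\<^sub>v m" "L *\<^sub>v q = c \<cdot>\<^sub>v q"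
    using L_extreme(2) unfolding eigenvalue_def eigenvector_def c_def by auto
  note energy = eigenvector_output_energy[OF q(1,3)]
  have L1: "bound_L1 = \<sigma>w\<^sup>2 / (c * a ^ 4) + \<sigma>v\<^sup>2 / a\<^sup>2"
    unfolding bound_L1_def c_def[symmetric] a_def[symmetric] using c a
    by (simp add: field_simps power2_eq_square power4_eq_xxxx)
  have "bound_L1 * (\<Sum>i<m. (w i)\<^sup>2 * c\<^sup>2 * (q $ i)\<^sup>2)
      = (\<Sum>i<m. \<sigma>w\<^sup>2 * c * (q $ i)\<^sup>2 * ((w i)\<^sup>2 / a ^ 4) + \<sigma>v\<^sup>2 * c\<^sup>2 * (q $ i)\<^sup>2 * ((w i)\<^sup>2 / a\<^sup>2))"
    unfolding L1 sum_distrib_left using c a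
    by (intro sum.cong refl) (simp add: field_simps power2_eq_square power4_eq_xxxx)
  also have "\<dots> \<le> (\<Sum>i<m. \<sigma>w\<^sup>2 * c * (q $ i)\<^sup>2 * 1 + \<sigma>v\<^sup>2 * c\<^sup>2 * (q $ i)\<^sup>2 * w i)"
  proof (intro sum_mono add_mono mult_left_mono)
    fix i assume "i \<in> {..<m}"
    then have wi: "0 < w i" "w i \<le> a\<^sup>2" using w_pos Wh_bounds(1) unfolding a_def by auto
    then have "(w i)\<^sup>2 \<le> (a\<^sup>2)\<^sup>2" by (intro power_mono) auto
    then show "(w i)\<^sup>2 / a ^ 4 \<le> 1" using a by (simp add: power_mult[symmetric])
    have "(w i)\<^sup>2 \<le> w i * a\<^sup>2" using wi by (simp add: power2_eq_square)
    then show "(w i)\<^sup>2 / a\<^sup>2 \<le> w i" using a by (simp add: divide_le_eq)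
  qed (use c in auto)
  finally have "bound_L1 * ((W *\<^sub>v (L *\<^sub>v q)) \<bullet> (W *\<^sub>v (L *\<^sub>v q)))
      \<le> sigma_max (transfer 0) ^ 2 * ((W *\<^sub>v (L *\<^sub>v q)) \<bullet> (W *\<^sub>v (L *\<^sub>v q)))"
    using output_energy_le_sigma_max_transfer_zero[OF q(1)] unfolding energy by simp
  moreover obtain i where "i < m" "q $ i \<noteq> 0" using q(1,2) by (auto simp: vec_eq_iff)
  then have "0 < (W *\<^sub>v (L *\<^sub>v q)) \<bullet> (W *\<^sub>v (L *\<^sub>v q))"
    unfolding energy using c w_pos[OF \<open>i < m\<close>] by (intro sum_pos2[of _ i]) auto
  ultimately show ?thesis by (rule mult_right_le_imp_le)
qed

lemma quadratic_form_L_ge_inverse: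
  assumes q: "q \<in> carrier_vec m" and e: "e \<in> carrier_vec m" "e \<bullet> e = 1" and Lq: "L *\<^sub>v q = e"
  shows "1 / lambda_max L \<le> q \<bullet> (L *\<^sub>v q)"
proof -
  have "1 = (q \<bullet> (L *\<^sub>v e))\<^sup>2"
    using symmetric_form_commute[OF L_carrier L_sym e(1) q] Lq e by simp
  also have "\<dots> \<le> (q \<bullet> (L *\<^sub>v q)) * (e \<bullet> (L *\<^sub>v e))"
    by (rule psd_cauchy_schwarz[OF L_carrier L_sym L_psd q e(1)])
  also have "\<dots> \<le> (q \<bullet> (L *\<^sub>v q)) * lambda_max L"
    using L_extreme(3)[OF e(1)] e(2) L_psd[OF q] by (simp add: mult_left_mono)
  finally show ?thesis using lambda_max_L_pos by (simp add: divide_le_eq mult.commute)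
qed

text \<open>The test vector is \<open>q = L\<^sup>-\<^sup>1 e\<^sub>l\<close> for an edge \<open>l\<close> of minimal weight.\<close>
lemma bound_L2_le: "bound_L2 \<le> sigma_max (transfer 0) ^ 2"
proof -
  define lmax where "lmax = lambda_max L"
  define a where "a = lambda_max Wh"
  define b where "b = lambda_min Wh"
  have lmax: "0 < lmax" unfolding lmax_def by (rule lambda_max_L_pos)
  have a: "0 < a" unfolding a_def by (rule lambda_max_Wh_pos)
  have b: "0 < b" "b \<le> a" unfolding a_def b_def by (rule Wh_bounds(3,4))+
  obtain l where l: "l < m" "w l = b\<^sup>2" using Wh_bounds(2) unfolding b_def by blast
  obtain Linv where Linv: "Linv \<in> carrier_mat m m" "L * Linv = 1\<^sub>m m"
    using inverse_exists_if_kernel_trivial[OF L_carrier L_kernel] by blast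
  define e :: "real vec" where "e = unit_vec m l"
  have e: "e \<in> carrier_vec m" "e \<bullet> e = 1" unfolding e_def using l(1) by auto
  define q where "q = Linv *\<^sub>v e"
  have q: "q \<in> carrier_vec m" unfolding q_def using Linv(1) e(1) by simp
  have Lq: "L *\<^sub>v q = e" unfolding q_def using Linv e(1) L_carrier by (simp add: assoc_mult_mat_vec[symmetric, of _ m m])
  have "W *\<^sub>v (L *\<^sub>v q) = b\<^sup>2 \<cdot>\<^sub>v e"
    unfolding Lq e_def using l by (intro eq_vecI) (auto simp: W_mult_vec)
  then have yy: "(W *\<^sub>v (L *\<^sub>v q)) \<bullet> (W *\<^sub>v (L *\<^sub>v q)) = b ^ 4"
    using e by (simp add: scalar_prod_smult_distrib[of _ m] smult_scalar_prod_distrib[of _ m])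
  have "(\<Sum>i<m. w i * (e $ i)\<^sup>2) = (\<Sum>i<m. if i = l then w l else 0)"
    unfolding e_def by (intro sum.cong) (auto simp: unit_vec_def)
  then have energy: "(B\<^sup>T *\<^sub>v q) \<bullet> (B\<^sup>T *\<^sub>v q) = \<sigma>w\<^sup>2 * (q \<bullet> (L *\<^sub>v q)) + \<sigma>v\<^sup>2 * b\<^sup>2"
    unfolding B_norm[OF q] using l by (simp add: Lq)
  have qLq: "1 / lmax \<le> q \<bullet> (L *\<^sub>v q)"
    unfolding lmax_def by (rule quadratic_form_L_ge_inverse[OF q e Lq])
  have "bound_L2 * b ^ 4 = \<sigma>w\<^sup>2 * (1 / lmax) * (b / a) ^ 3 + \<sigma>v\<^sup>2 * b\<^sup>2 * (b / a)\<^sup>2"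
    unfolding bound_L2_def lmax_def[symmetric] a_def[symmetric] b_def[symmetric] using lmax a b
    by (simp add: field_simps power2_eq_square power3_eq_cube power4_eq_xxxx)
  also have "\<dots> \<le> \<sigma>w\<^sup>2 * (q \<bullet> (L *\<^sub>v q)) * 1 + \<sigma>v\<^sup>2 * b\<^sup>2 * 1"
  proof (intro add_mono mult_mono mult_left_mono)
    have "0 \<le> b / a" "b / a \<le> 1" using a b by auto
    then show "(b / a) ^ 3 \<le> 1" "(b / a)\<^sup>2 \<le> 1" by (simp_all add: power_le_one)
  qed (use qLq lmax L_psd[OF q] a b in auto)
  also have "\<dots> \<le> sigma_max (transfer 0) ^ 2 * b ^ 4"
    using output_energy_le_sigma_max_transfer_zero[OF q] unfolding yy energy by simp
  finally show ?thesis using b by simp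
qed

lemma hinf_norm_transfer_bounds:
  "max bound_L1 bound_L2 \<le> (hinf_norm transfer)\<^sup>2 \<and> (hinf_norm transfer)\<^sup>2 \<le> bound_U"
proof -
  define f where "f \<omega> = sigma_max (transfer (\<i> * complex_of_real \<omega>))" for \<omega> :: real
  have hinf: "hinf_norm transfer = (SUP \<omega>. f \<omega>)" unfolding hinf_norm_def f_def ..
  have nonneg: "0 \<le> f \<omega>" for \<omega> unfolding f_def by (rule sigma_max_sq(5)[OF transfer_carrier k_pos])
  have bound: "f \<omega> ^ 2 \<le> bound_U" for \<omega> unfolding f_def by (rule sigma_max_transfer_le)
  have "max bound_L1 bound_L2 \<le> f 0 ^ 2" unfolding f_def using bound_L1_le bound_L2_le by simp
  then show ?thesis unfolding hinf
    using cSUP_power2_bounds[of f bound_U, OF nonneg bound] by (meson order_trans)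
qed

end

section \<open>The tree network\<close>

lemma congruence_output_energy:
  fixes D :: "real mat" and \<epsilon> w :: "nat \<Rightarrow> real" and \<sigma>w \<sigma>v :: real
  assumes D: "D \<in> carrier_mat n m"
    and w: "\<forall>l<m. 0 < w l" and \<epsilon>: "\<forall>i<n. 0 < \<epsilon> i" and q: "q \<in> carrier_vec m"
  defines "Les \<equiv> D\<^sup>T * mat_diag n (\<lambda>i. 1 / \<epsilon> i) * D"
    and "B \<equiv> append_cols (\<sigma>w \<cdot>\<^sub>m (D\<^sup>T * mat_diag n (\<lambda>i. 1 / sqrt (\<epsilon> i))))
      ((- \<sigma>v) \<cdot>\<^sub>m (D\<^sup>T * mat_diag n (\<lambda>i. 1 / \<epsilon> i) * D * mat_diag m (\<lambda>l. sqrt (w l))))"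
  shows "(B\<^sup>T *\<^sub>v q) \<bullet> (B\<^sup>T *\<^sub>v q)
    = \<sigma>w\<^sup>2 * (q \<bullet> (Les *\<^sub>v q)) + \<sigma>v\<^sup>2 * (\<Sum>l<m. w l * ((Les *\<^sub>v q) $ l)\<^sup>2)"
proof -
  let ?Eh = "mat_diag n (\<lambda>i. 1 / sqrt (\<epsilon> i))" and ?Wh = "mat_diag m (\<lambda>l. sqrt (w l))"
  have Les: "Les \<in> carrier_mat m m" unfolding Les_def by (rule congruence_carrier[OF D])
  have Les_sym: "Les\<^sup>T = Les" unfolding Les_def by (rule congruence_diag_symmetric[OF D])
  have Dq: "D *\<^sub>v q \<in> carrier_vec n" using D q by simp
  have Lq: "Les *\<^sub>v q \<in> carrier_vec m" using Les q by simp
  have P: "(\<sigma>w \<cdot>\<^sub>m (D\<^sup>T * ?Eh))\<^sup>T *\<^sub>v q = \<sigma>w \<cdot>\<^sub>v (?Eh *\<^sub>v (D *\<^sub>v q))"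
    using transpose_smult_mult_mult_vec[of "D\<^sup>T" m n ?Eh n q] D q
    by (simp add: transpose_transpose mat_diag_transpose)
  have Q: "((- \<sigma>v) \<cdot>\<^sub>m (Les * ?Wh))\<^sup>T *\<^sub>v q = (- \<sigma>v) \<cdot>\<^sub>v (?Wh *\<^sub>v (Les *\<^sub>v q))"
    using transpose_smult_mult_mult_vec[OF Les, of ?Wh m q] q Les_sym by (simp add: mat_diag_transpose)
  have x: "?Eh *\<^sub>v (D *\<^sub>v q) \<in> carrier_vec n" by (rule mult_mat_vec_carrier[OF mat_diag_dim Dq])
  have y: "?Wh *\<^sub>v (Les *\<^sub>v q) \<in> carrier_vec m" by (rule mult_mat_vec_carrier[OF mat_diag_dim Lq])
  have "\<sigma>w \<cdot>\<^sub>m (D\<^sup>T * ?Eh) \<in> carrier_mat m n" "(- \<sigma>v) \<cdot>\<^sub>m (Les * ?Wh) \<in> carrier_mat m m"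
    using D Les by auto
  then have "B\<^sup>T *\<^sub>v q = (\<sigma>w \<cdot>\<^sub>v (?Eh *\<^sub>v (D *\<^sub>v q))) @\<^sub>v ((- \<sigma>v) \<cdot>\<^sub>v (?Wh *\<^sub>v (Les *\<^sub>v q)))"
    unfolding B_def Les_def[symmetric] P[symmetric] Q[symmetric] by (rule transpose_append_cols_mult_vec[OF _ _ q])
  then have "(B\<^sup>T *\<^sub>v q) \<bullet> (B\<^sup>T *\<^sub>v q)
      = \<sigma>w\<^sup>2 * ((?Eh *\<^sub>v (D *\<^sub>v q)) \<bullet> (?Eh *\<^sub>v (D *\<^sub>v q)))
        + \<sigma>v\<^sup>2 * ((?Wh *\<^sub>v (Les *\<^sub>v q)) \<bullet> (?Wh *\<^sub>v (Les *\<^sub>v q)))"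
    using x y by (simp add: scalar_prod_append[of _ n _ m] power2_eq_square
        smult_scalar_prod_distrib[of _ n] scalar_prod_smult_distrib[of _ n]
        smult_scalar_prod_distrib[of _ m] scalar_prod_smult_distrib[of _ m])
  also have "(?Eh *\<^sub>v (D *\<^sub>v q)) \<bullet> (?Eh *\<^sub>v (D *\<^sub>v q)) = q \<bullet> (Les *\<^sub>v q)"
    unfolding mat_diag_mult_vec_norm[OF Dq] Les_def quadratic_form_congruence_diag[OF D q]
    using \<epsilon> by (intro sum.cong) (auto simp: power_divide)
  also have "(?Wh *\<^sub>v (Les *\<^sub>v q)) \<bullet> (?Wh *\<^sub>v (Les *\<^sub>v q)) = (\<Sum>l<m. w l * ((Les *\<^sub>v q) $ l)\<^sup>2)"
    unfolding mat_diag_mult_vec_norm[OF Lq] using w by (intro sum.cong) auto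
  finally show ?thesis .
qed

lemma tree_laplacian_system:
  fixes w \<epsilon> :: "nat \<Rightarrow> real" and \<sigma>w \<sigma>v :: real
  assumes n: "n \<ge> 2" and tree: "is_tree n e" and w: "\<forall>l<n - 1. 0 < w l" and \<epsilon>: "\<forall>i<n. 0 < \<epsilon> i"
  defines "D \<equiv> incidence_mat n (n - 1) e"
  shows "laplacian_system (n - 1) (n + (n - 1)) (D\<^sup>T * mat_diag n (\<lambda>i. 1 / \<epsilon> i) * D)
    (append_cols (\<sigma>w \<cdot>\<^sub>m (D\<^sup>T * mat_diag n (\<lambda>i. 1 / sqrt (\<epsilon> i))))
      ((- \<sigma>v) \<cdot>\<^sub>m (D\<^sup>T * mat_diag n (\<lambda>i. 1 / \<epsilon> i) * D * mat_diag (n - 1) (\<lambda>l. sqrt (w l)))))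
    w \<sigma>w \<sigma>v"
proof -
  have D: "D \<in> carrier_mat n (n - 1)" unfolding D_def by (simp add: incidence_mat_def)
  define Les where "Les = D\<^sup>T * mat_diag n (\<lambda>i. 1 / \<epsilon> i) * D"
  define B where "B = append_cols (\<sigma>w \<cdot>\<^sub>m (D\<^sup>T * mat_diag n (\<lambda>i. 1 / sqrt (\<epsilon> i))))
    ((- \<sigma>v) \<cdot>\<^sub>m (Les * mat_diag (n - 1) (\<lambda>l. sqrt (w l))))"
  have L: "Les \<in> carrier_mat (n - 1) (n - 1)" unfolding Les_def by (rule congruence_carrier[OF D])
  have "D\<^sup>T \<in> carrier_mat (n - 1) n" using D by simp
  then have "B \<in> carrier_mat (n - 1) (n + (n - 1))"
    unfolding B_def using mult_carrier_mat[OF _ mat_diag_dim] mult_carrier_mat[OF L mat_diag_dim]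
    by (intro append_cols_carrier smult_carrier_mat)
  moreover have "Les\<^sup>T = Les" unfolding Les_def by (rule congruence_diag_symmetric[OF D])
  ultimately have "laplacian_system (n - 1) (n + (n - 1)) Les B w \<sigma>w \<sigma>v"
  proof unfold_locales
    show "0 < q \<bullet> (Les *\<^sub>v q)" if "q \<in> carrier_vec (n - 1)" "q \<noteq> 0\<^sub>v (n - 1)" for q
      unfolding Les_def D_def by (rule tree_laplacian_pos_def[OF n tree \<epsilon> that])
    show "(B\<^sup>T *\<^sub>v q) \<bullet> (B\<^sup>T *\<^sub>v q)
        = \<sigma>w\<^sup>2 * (q \<bullet> (Les *\<^sub>v q)) + \<sigma>v\<^sup>2 * (\<Sum>l<n - 1. w l * ((Les *\<^sub>v q) $ l)\<^sup>2)"
      if "q \<in> carrier_vec (n - 1)" for q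
      unfolding B_def Les_def by (rule congruence_output_energy[OF D w \<epsilon> that])
  qed (use n w L in auto)
  then show ?thesis unfolding B_def Les_def .
qed

theorem theorem4:
  fixes n :: nat and e :: "nat \<Rightarrow> nat \<times> nat"
    and w \<epsilon> :: "nat \<Rightarrow> real" and \<sigma>w \<sigma>v :: real
  assumes "n \<ge> 2"
    and "is_tree n e"
    and "\<forall>l < n - 1. w l > 0"
    and "\<forall>i < n. \<epsilon> i > 0"
  shows
    "let D = incidence_mat n (n - 1) e;
         Wh = mat_diag (n - 1) (\<lambda>l. sqrt (w l));
         Les = transpose_mat D * mat_diag n (\<lambda>i. 1 / \<epsilon> i) * D;
         L1 = (\<sigma>w\<^sup>2 + \<sigma>v\<^sup>2 * lambda_min Les * lambda_max Wh ^ 2)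
              / (lambda_min Les * lambda_max Wh ^ 4);
         L2 = (\<sigma>w\<^sup>2 + \<sigma>v\<^sup>2 * lambda_max Les * lambda_max Wh * lambda_min Wh)
              / (lambda_max Les * lambda_max Wh ^ 3 * lambda_min Wh);
         U = (\<sigma>w\<^sup>2 + \<sigma>v\<^sup>2 * lambda_min Les * lambda_min Wh ^ 2)
              / (lambda_min Les * lambda_min Wh ^ 4);
         N = hinf_norm (Sigma_tilde n e w \<epsilon> \<sigma>w \<sigma>v)
     in max L1 L2 \<le> N\<^sup>2 \<and> N\<^sup>2 \<le> U"
proof -
  define D where "D = incidence_mat n (n - 1) e"
  define Les where "Les = D\<^sup>T * mat_diag n (\<lambda>i. 1 / \<epsilon> i) * D"
  define B where "B = append_cols (\<sigma>w \<cdot>\<^sub>m (D\<^sup>T * mat_diag n (\<lambda>i. 1 / sqrt (\<epsilon> i))))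
    ((- \<sigma>v) \<cdot>\<^sub>m (Les * mat_diag (n - 1) (\<lambda>l. sqrt (w l))))"
  interpret laplacian_system "n - 1" "n + (n - 1)" Les B w \<sigma>w \<sigma>v
    unfolding B_def Les_def D_def by (rule tree_laplacian_system[OF assms])
  have "Sigma_tilde n e w \<epsilon> \<sigma>w \<sigma>v s = transfer s" for s
    unfolding transfer_def pencil_def W_def by (simp add: Sigma_tilde_def Let_def B_def Les_def D_def)
  then have "Sigma_tilde n e w \<epsilon> \<sigma>w \<sigma>v = transfer" ..
  then show ?thesis
    using hinf_norm_transfer_bounds unfolding bound_L1_def bound_L2_def bound_U_def Wh_def
    unfolding Let_def D_def[symmetric] Les_def[symmetric] by simp
qed

end
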